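(* Consider the following regulation game. A random triple $(\theta,s,d)$ (agent type, training state, deployment state) has joint distribution $\pi$. Prediction functions are vectors $f\in\mathbb{R}^n$. Given $s$ (and $\theta$), expected agent utility and expected principal welfare are $\overline{U}_\theta(f;s) = -(f-\bar u)'\Omega(f-\bar u)$ and $\overline{W}(f;s) = -(f-\bar w)'\Omega(f-\bar w)$, with bliss points $\bar u=\bar u(s,\theta)$, $\bar w=\bar w(s)\in\mathbb{R}^n$ and a common fixed (non-random) symmetric positive definite weight matrix $\Omega$ (i.e. the agent's and principal's weight matrices coincide and equal $\Omega$). The principal first (knowing only $\pi$) chooses a linear explainer, a $k\times n$ real matrix $\mathcal{E}$, and possibly an ex-ante restriction $\{f: Af=a\}$ with $A\in\mathbb{R}^{m\times n}$, $a\in\mathbb{R}^m$ not depending on $s,\theta$; after observing $s$ she dictates the value $\mathcal{E}f=e(s)$ (failing the audit has infinite cost to the agent). The agent, knowing $\theta,s$, chooses $f$ maximizing $\overline{U}_\theta(f;s)$ subject to these constraints. A second-best solution is a choice of explainer, restriction and explanation values maximizing $\mathop{E}_\pi[\overline{W}(f;s)]$. Let $\lambda_{(i)}(M)$ denote the $i$-th highest eigenvalue of a symmetric matrix $M$. If $$\lambda_{(n)}\big(\operatorname{Var}_\pi(\Omega^{1/2}\bar w)\big)\ \ge\ \lambda_{(k+1)}\big(\mathop{E}_\pi[(\Omega^{1/2}(\bar u-\bar w))(\Omega^{1/2}(\bar u-\bar w))']\big),$$ then there is a second-best solution of the principal that does not involve any ex-ante restrictions. *)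

theory Defs
  imports "HOL-Analysis.Analysis" "HOL-Probability.Probability"
    "HOL-Computational_Algebra.Polynomial"
begin

definition sym_mat :: "real^'n^'n \<Rightarrow> bool" where
  "sym_mat M \<longleftrightarrow> transpose M = M"

definition pos_def_mat :: "real^'n^'n \<Rightarrow> bool" where
  "pos_def_mat M \<longleftrightarrow> sym_mat M \<and> (\<forall>x. x \<noteq> 0 \<longrightarrow> x \<bullet> (M *v x) > 0)"

definition psd_mat :: "real^'n^'n \<Rightarrow> bool" where
  "psd_mat M \<longleftrightarrow> sym_mat M \<and> (\<forall>x. x \<bullet> (M *v x) \<ge> 0)"

definition mat_sqrt :: "real^'n^'n \<Rightarrow> real^'n^'n" where
  "mat_sqrt M = (THE R. psd_mat R \<and> R ** R = M)"

definition char_poly_mat :: "real^'n^'n \<Rightarrow> real poly" where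
  "char_poly_mat M = det (\<chi> i j. (if i = j then [:0, 1:] else 0) - [: M $ i $ j :])"

text \<open>Eigenvalues with (algebraic) multiplicity, and the i-th highest one (1-based).\<close>
definition eigenvalues_mset :: "real^'n^'n \<Rightarrow> real multiset" where
  "eigenvalues_mset M = proots (char_poly_mat M)"

definition eig_desc :: "real^'n^'n \<Rightarrow> nat \<Rightarrow> real" where
  "eig_desc M i = rev (sorted_list_of_multiset (eigenvalues_mset M)) ! (i - 1)"

definition outer :: "real^'n \<Rightarrow> real^'n \<Rightarrow> real^'n^'n" where
  "outer x y = (\<chi> i j. x $ i * y $ j)"

definition quad :: "real^'n^'n \<Rightarrow> real^'n \<Rightarrow> real" where
  "quad \<Omega> x = x \<bullet> (\<Omega> *v x)"

text \<open>Explainer: k rows E 0..E (k-1); explanation values es i (i<k);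
  ex-ante restriction: m rows A 0..A (m-1) and right-hand side a.\<close>
definition feasible_set ::
  "nat \<Rightarrow> (nat \<Rightarrow> real^'n) \<Rightarrow> (nat \<Rightarrow> real) \<Rightarrow> nat \<Rightarrow> (nat \<Rightarrow> real^'n) \<Rightarrow> (nat \<Rightarrow> real)
   \<Rightarrow> (real^'n) set" where
  "feasible_set k E es m A a =
     {f. (\<forall>i<k. E i \<bullet> f = es i) \<and> (\<forall>j<m. A j \<bullet> f = a j)}"

definition agent_choice :: "real^'n^'n \<Rightarrow> real^'n \<Rightarrow> (real^'n) set \<Rightarrow> real^'n" where
  "agent_choice \<Omega> u F =
     (THE f. f \<in> F \<and> (\<forall>g\<in>F. - quad \<Omega> (g - u) \<le> - quad \<Omega> (f - u)))"

text \<open>Expected principal loss = - E[W], as a nonnegative extended real.\<close>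
definition expected_loss ::
  "'w measure \<Rightarrow> ('w \<Rightarrow> 's) \<Rightarrow> ('w \<Rightarrow> 't) \<Rightarrow> ('s \<Rightarrow> 't \<Rightarrow> real^'n) \<Rightarrow> ('s \<Rightarrow> real^'n)
   \<Rightarrow> real^'n^'n \<Rightarrow> nat \<Rightarrow> (nat \<Rightarrow> real^'n) \<Rightarrow> ('s \<Rightarrow> nat \<Rightarrow> real)
   \<Rightarrow> nat \<Rightarrow> (nat \<Rightarrow> real^'n) \<Rightarrow> (nat \<Rightarrow> real) \<Rightarrow> ennreal" where
  "expected_loss M S \<Theta> ub wb \<Omega> k E e m A a =
     (\<integral>\<^sup>+ \<omega>. ennreal (quad \<Omega>
        (agent_choice \<Omega> (ub (S \<omega>) (\<Theta> \<omega>)) (feasible_set k E (e (S \<omega>)) m A a) - wb (S \<omega>))) \<partial>M)"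

text \<open>Admissible policy: explanation values measurable in s, and the audit can be
  passed (constraints feasible) in every state.\<close>
definition admissible ::
  "'w measure \<Rightarrow> ('w \<Rightarrow> 's) \<Rightarrow> 's measure \<Rightarrow> nat \<Rightarrow> (nat \<Rightarrow> real^'n) \<Rightarrow> ('s \<Rightarrow> nat \<Rightarrow> real)
   \<Rightarrow> nat \<Rightarrow> (nat \<Rightarrow> real^'n) \<Rightarrow> (nat \<Rightarrow> real) \<Rightarrow> bool" where
  "admissible M S Ms k E e m A a \<longleftrightarrow>
     (\<forall>i<k. (\<lambda>s. e s i) \<in> borel_measurable Ms) \<and>
     (\<forall>\<omega>\<in>space M. feasible_set k E (e (S \<omega>)) m A a \<noteq> {})"

definition second_best ::
  "'w measure \<Rightarrow> ('w \<Rightarrow> 's) \<Rightarrow> 's measure \<Rightarrow> ('w \<Rightarrow> 't) \<Rightarrow> ('s \<Rightarrow> 't \<Rightarrow> real^'n)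
   \<Rightarrow> ('s \<Rightarrow> real^'n) \<Rightarrow> real^'n^'n \<Rightarrow> nat \<Rightarrow> (nat \<Rightarrow> real^'n) \<Rightarrow> ('s \<Rightarrow> nat \<Rightarrow> real)
   \<Rightarrow> nat \<Rightarrow> (nat \<Rightarrow> real^'n) \<Rightarrow> (nat \<Rightarrow> real) \<Rightarrow> bool" where
  "second_best M S Ms \<Theta> ub wb \<Omega> k E e m A a \<longleftrightarrow>
     admissible M S Ms k E e m A a \<and>
     (\<forall>E' e' m' A' a'. admissible M S Ms k E' e' m' A' a' \<longrightarrow>
        expected_loss M S \<Theta> ub wb \<Omega> k E e m A a
          \<le> expected_loss M S \<Theta> ub wb \<Omega> k E' e' m' A' a')"

end

(*
  Write R for the symmetric square root of Omega. In the whitened coordinates x = R f the agent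
  projects R u orthogonally onto the affine set of predictions passing the audit, and the
  principal's loss is |x - R w|^2. Let D be the second moment of z = R (u - w), with eigenvalues
  mu_1 >= ... >= mu_n and orthonormal eigenvectors v_i.

  Explaining the directions R v_1, ..., R v_k and dictating the values they take at w leaves the
  agent free exactly in the directions v_(k+1), ..., v_n, so the expected loss is
  mu_(k+1) + ... + mu_n.

  Conversely, take any explainer together with an ex-ante restriction, and an orthonormal basis
  B1 of the span of the whitened restriction rows, extended to a basis B2 of the span of all
  whitened constraint rows, with card B2 <= card B1 + k. In directions orthogonal to B2 the agent
  is unconstrained, which by Ky Fan's inequality costs at least the sum of all eigenvalues of D
  except the card B2 largest, i.e. at least mu_(k+1) + ... + mu_n - card B1 * mu_(k+1). In each
  direction b of B1 the prediction is a constant, costing at least Var (b . R w), which is at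
  least the smallest eigenvalue of Var (R w) and hence, by hypothesis, at least mu_(k+1). So no
  restriction beats the eigenbasis explainer.
*)
theory Submission
  imports Defs
begin

lemma sym_mat_inner:
  assumes "sym_mat M" shows "(M *v x) \<bullet> y = x \<bullet> (M *v y)"
proof -
  have "M *v x = x v* M"
    using assms transpose_matrix_vector[of M x] unfolding sym_mat_def by simp
  then show ?thesis by (simp add: dot_lmul_matrix)
qed

lemma quad_eq_norm_root:
  assumes "sym_mat R" and "R ** R = \<Omega>"
  shows "quad \<Omega> x = (norm (R *v x))\<^sup>2"
proof -
  have "quad \<Omega> x = x \<bullet> (R *v (R *v x))"
    unfolding quad_def assms(2)[symmetric] by (simp add: matrix_vector_mul_assoc)
  also have "\<dots> = (norm (R *v x))\<^sup>2"
    by (simp add: sym_mat_inner[OF assms(1), symmetric] power2_norm_eq_inner)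
  finally show ?thesis .
qed

lemma pos_def_mat_imp_psd_mat: "pos_def_mat M \<Longrightarrow> psd_mat M"
  unfolding pos_def_mat_def psd_mat_def by (metis inner_zero_left order.refl less_imp_le)

lemma linear_plus_square_nonneg_imp_zero:
  fixes c d :: real
  assumes nonneg: "\<And>t. 0 \<le> 2 * t * c + t\<^sup>2 * d"
  shows "c = 0"
proof -
  define a where "a = \<bar>d\<bar> + 1"
  have a: "a > 0" "d - 2 * a < 0" unfolding a_def by auto
  have "0 \<le> (2 * (- c / a) * c + (- c / a)\<^sup>2 * d) * a\<^sup>2"
    using nonneg[of "- c / a"] by simp
  also have "\<dots> = c\<^sup>2 * (d - 2 * a)"
    using a by (simp add: field_simps power2_eq_square)
  finally show ?thesis using a by (simp add: zero_le_mult_iff)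
qed

section \<open>Orthonormal sets and families\<close>

definition orthonormal_set :: "(real^'n) set \<Rightarrow> bool" where
  "orthonormal_set B \<longleftrightarrow> pairwise orthogonal B \<and> (\<forall>b\<in>B. norm b = 1)"

lemma orthonormal_set_inner:
  assumes "orthonormal_set B" "b \<in> B" "b' \<in> B"
  shows "b \<bullet> b' = (if b = b' then 1 else 0)"
  using assms unfolding orthonormal_set_def pairwise_def orthogonal_def
  by (auto simp: norm_eq_1)

lemma orthonormal_set_independent:
  assumes "orthonormal_set B" shows "independent B"
  using assms unfolding orthonormal_set_def
  by (intro pairwise_orthogonal_independent) auto

lemma orthonormal_set_finite_card:
  fixes B :: "(real^'n) set"
  assumes "orthonormal_set B" shows "finite B" "card B \<le> CARD('n)"
  using independent_bound[OF orthonormal_set_independent[OF assms]] by auto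

lemma orthonormal_set_subset: "orthonormal_set B' \<Longrightarrow> B \<subseteq> B' \<Longrightarrow> orthonormal_set B"
  unfolding orthonormal_set_def by (auto intro: pairwise_subset)

lemma orthonormal_set_coeff:
  assumes "orthonormal_set B" "b0 \<in> B"
  shows "b0 \<bullet> (\<Sum>b\<in>B. c b *\<^sub>R b) = c b0"
proof -
  have "b0 \<bullet> (\<Sum>b\<in>B. c b *\<^sub>R b) = (\<Sum>b\<in>B. c b * (b0 \<bullet> b))"
    by (simp add: inner_sum_right)
  also have "\<dots> = c b0"
    using assms orthonormal_set_finite_card(1)[OF assms(1)]
    by (simp add: orthonormal_set_inner if_distrib cong: if_cong)
  finally show ?thesis .
qed

lemma orthonormal_set_bessel_eq:
  assumes "orthonormal_set B"
  shows "(norm (x - (\<Sum>b\<in>B. (b \<bullet> x) *\<^sub>R b)))\<^sup>2 = x \<bullet> x - (\<Sum>b\<in>B. (b \<bullet> x)\<^sup>2)"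
proof -
  define s where "s = (\<Sum>b\<in>B. (b \<bullet> x) *\<^sub>R b)"
  have "s \<bullet> y = (\<Sum>b\<in>B. (b \<bullet> x) * (b \<bullet> y))" for y
    unfolding s_def by (simp add: inner_sum_left)
  moreover have "b \<bullet> s = b \<bullet> x" if "b \<in> B" for b
    unfolding s_def by (rule orthonormal_set_coeff[OF assms that])
  ultimately have "s \<bullet> x = (\<Sum>b\<in>B. (b \<bullet> x)\<^sup>2)" "s \<bullet> s = (\<Sum>b\<in>B. (b \<bullet> x)\<^sup>2)"
    by (simp_all add: power2_eq_square)
  then show ?thesis
    unfolding s_def[symmetric] power2_norm_eq_inner
    by (simp add: inner_diff_left inner_diff_right inner_commute[of x s])
qed

lemma orthonormal_set_bessel:
  assumes "orthonormal_set B" shows "(\<Sum>b\<in>B. (b \<bullet> x)\<^sup>2) \<le> x \<bullet> x"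
  using orthonormal_set_bessel_eq[OF assms, of x]
    zero_le_power2[of "norm (x - (\<Sum>b\<in>B. (b \<bullet> x) *\<^sub>R b))"] by linarith

lemma orthonormal_set_expand:
  assumes "orthonormal_set B" and "span B = UNIV"
  shows "x = (\<Sum>b\<in>B. (b \<bullet> x) *\<^sub>R b)"
proof -
  define r where "r = x - (\<Sum>b\<in>B. (b \<bullet> x) *\<^sub>R b)"
  have "orthogonal r b" if "b \<in> B" for b
    using orthonormal_set_coeff[OF assms(1) that, of "\<lambda>b. b \<bullet> x"]
    unfolding r_def orthogonal_def by (simp add: inner_diff_right inner_commute[of _ b])
  then have "orthogonal r r"
    using assms(2) by (intro orthogonal_to_span[of r B]) (auto simp: orthogonal_commute)
  then show ?thesis unfolding r_def orthogonal_def by simp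
qed

lemma orthonormal_set_parseval:
  assumes "orthonormal_set B" and "span B = UNIV"
  shows "x \<bullet> x = (\<Sum>b\<in>B. (b \<bullet> x)\<^sup>2)"
  using orthonormal_set_bessel_eq[OF assms(1), of x] orthonormal_set_expand[OF assms, of x] by simp

lemma orthonormal_set_card_span:
  fixes B :: "(real^'n) set"
  assumes "orthonormal_set B" and "card B = CARD('n)"
  shows "span B = UNIV"
proof -
  have "UNIV \<subseteq> span B"
    using card_ge_dim_independent[OF subset_UNIV orthonormal_set_independent[OF assms(1)]] assms(2)
    by simp
  then show ?thesis by auto
qed

lemma orthonormal_set_extend:
  fixes B :: "(real^'n) set"
  assumes B: "orthonormal_set B"
  obtains B' where "orthonormal_set B'" "B \<subseteq> B'" "span B' = span (B \<union> T)"
proof -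
  obtain U where U0: "U \<inter> insert 0 B = {}" and po: "pairwise orthogonal (B \<union> U)"
    and sp: "span (B \<union> U) = span (B \<union> T)"
    using orthogonal_extension_strong[of B T] B unfolding orthonormal_set_def by blast
  define N where "N = (\<lambda>x. x /\<^sub>R norm x) ` (B \<union> U)"
  have nz: "u \<noteq> 0" if "u \<in> B \<union> U" for u
    using U0 that B unfolding orthonormal_set_def by auto
  have "B \<subseteq> N"
    using B unfolding N_def orthonormal_set_def by (force intro: image_eqI)
  moreover have "orthonormal_set N"
    unfolding orthonormal_set_def
  proof
    show "pairwise orthogonal N"
      unfolding pairwise_def
    proof (intro ballI impI)
      fix x y assume "x \<in> N" "y \<in> N" "x \<noteq> y"
      then obtain x0 y0 where "x0 \<in> B \<union> U" "y0 \<in> B \<union> U" "x0 \<noteq> y0"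
        and "x = x0 /\<^sub>R norm x0" "y = y0 /\<^sub>R norm y0"
        unfolding N_def by auto
      then show "orthogonal x y" using po unfolding pairwise_def by (simp add: orthogonal_clauses)
    qed
    show "\<forall>b\<in>N. norm b = 1" using nz unfolding N_def by auto
  qed
  moreover have "span N = span (B \<union> U)"
  proof -
    have "N \<subseteq> span (B \<union> U)" unfolding N_def by (auto intro: span_base span_mul)
    moreover have "B \<union> U \<subseteq> span N"
    proof
      fix x assume x: "x \<in> B \<union> U"
      then have "norm x *\<^sub>R (x /\<^sub>R norm x) \<in> span N"
        unfolding N_def by (intro span_mul span_base) auto
      then show "x \<in> span N" using nz[OF x] by simp
    qed
    ultimately show ?thesis by (simp add: span_eq)
  qed
  ultimately show ?thesis using sp that by auto
qed

lemma orthonormal_flag: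
  fixes H C :: "(real^'n) set"
  assumes "finite C"
  obtains B1 B2 B3 where "orthonormal_set B3" "span B3 = UNIV" "B1 \<subseteq> B2" "B2 \<subseteq> B3"
    "B1 \<subseteq> span H" "H \<subseteq> span B2" "C \<subseteq> span B2" "card B2 \<le> card B1 + card C"
proof -
  obtain B1 where B1: "B1 \<subseteq> span H" "pairwise orthogonal B1" "\<And>x. x \<in> B1 \<Longrightarrow> norm x = 1"
    "span B1 = span H"
    using orthonormal_basis_subspace[OF subspace_span[of H]] by metis
  then have "orthonormal_set B1" unfolding orthonormal_set_def by simp
  then obtain B2 where B2: "orthonormal_set B2" "B1 \<subseteq> B2" "span B2 = span (B1 \<union> C)"
    by (rule orthonormal_set_extend)
  obtain B3 where B3: "orthonormal_set B3" "B2 \<subseteq> B3" "span B3 = span (B2 \<union> UNIV)"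
    by (rule orthonormal_set_extend[OF B2(1)])
  have "span H \<subseteq> span B2" using B1(4) B2(3) span_mono[of B1 "B1 \<union> C"] by auto
  then have "H \<subseteq> span B2" "C \<subseteq> span B2" using B2(3) span_superset[of H] span_superset[of "B1 \<union> C"]
    by auto
  moreover have "card B2 \<le> card B1 + card C"
  proof -
    have "card B2 = dim (B1 \<union> C)"
      using B2(3) dim_span_eq_card_independent[OF orthonormal_set_independent[OF B2(1)]] dim_span
      by metis
    also have "\<dots> \<le> card (B1 \<union> C)"
      using assms orthonormal_set_finite_card(1)[OF \<open>orthonormal_set B1\<close>] by (intro dim_le_card') simp
    also have "\<dots> \<le> card B1 + card C" by (rule card_Un_le)
    finally show ?thesis .
  qed
  ultimately show ?thesis using that B1(1) B2(2) B3 by simp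
qed

definition orthonormal_fam :: "(nat \<Rightarrow> real^'n) \<Rightarrow> nat \<Rightarrow> bool" where
  "orthonormal_fam v p \<longleftrightarrow> (\<forall>i<p. \<forall>j<p. v i \<bullet> v j = (if i = j then 1 else 0))"

lemma orthonormal_fam_mono: "orthonormal_fam v p \<Longrightarrow> q \<le> p \<Longrightarrow> orthonormal_fam v q"
  unfolding orthonormal_fam_def by auto

lemma orthonormal_fam_inj:
  assumes "orthonormal_fam v p" shows "inj_on v {..<p}"
proof (rule inj_onI)
  fix i j assume "i \<in> {..<p}" "j \<in> {..<p}" "v i = v j"
  then show "i = j" using assms unfolding orthonormal_fam_def by (metis lessThan_iff zero_neq_one)
qed

lemma orthonormal_fam_set:
  assumes "orthonormal_fam v p" shows "orthonormal_set (v ` {..<p})"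
  using assms unfolding orthonormal_fam_def orthonormal_set_def pairwise_def orthogonal_def
  by (auto simp: norm_eq_1)

lemma orthonormal_fam_sum:
  assumes "orthonormal_fam v p"
  shows "(\<Sum>b\<in>v ` {..<p}. g b) = (\<Sum>i<p. g (v i))"
  by (rule sum.reindex[OF orthonormal_fam_inj[OF assms], unfolded o_def])

lemma orthonormal_fam_coeff:
  assumes "orthonormal_fam v p" and "j < p"
  shows "v j \<bullet> (\<Sum>i<p. c i *\<^sub>R v i) = c j"
proof -
  have "v j \<bullet> (\<Sum>i<p. c i *\<^sub>R v i) = (\<Sum>i<p. c i * (v j \<bullet> v i))"
    by (simp add: inner_sum_right)
  also have "\<dots> = (\<Sum>i<p. if i = j then c i else 0)"
    using assms unfolding orthonormal_fam_def by (intro sum.cong) auto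
  finally show ?thesis using assms(2) by simp
qed

lemma orthonormal_fam_span:
  fixes v :: "nat \<Rightarrow> real^'n"
  assumes "orthonormal_fam v CARD('n)"
  shows "span (v ` {..<CARD('n)}) = UNIV"
  using orthonormal_set_card_span[OF orthonormal_fam_set[OF assms]]
  by (simp add: card_image orthonormal_fam_inj[OF assms])

lemma orthonormal_fam_expand:
  fixes v :: "nat \<Rightarrow> real^'n"
  assumes "orthonormal_fam v CARD('n)"
  shows "x = (\<Sum>i<CARD('n). (v i \<bullet> x) *\<^sub>R v i)"
  using orthonormal_set_expand[OF orthonormal_fam_set[OF assms] orthonormal_fam_span[OF assms]]
  by (simp add: orthonormal_fam_sum[OF assms])

lemma orthonormal_fam_parseval:
  fixes v :: "nat \<Rightarrow> real^'n"
  assumes "orthonormal_fam v CARD('n)"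
  shows "x \<bullet> x = (\<Sum>i<CARD('n). (v i \<bullet> x)\<^sup>2)"
  using orthonormal_set_parseval[OF orthonormal_fam_set[OF assms] orthonormal_fam_span[OF assms]]
  by (simp add: orthonormal_fam_sum[OF assms])

lemma orthonormal_fam_bessel_eq:
  assumes "orthonormal_fam v p"
  shows "(norm (x - (\<Sum>i<p. (v i \<bullet> x) *\<^sub>R v i)))\<^sup>2 = x \<bullet> x - (\<Sum>i<p. (v i \<bullet> x)\<^sup>2)"
  using orthonormal_set_bessel_eq[OF orthonormal_fam_set[OF assms]]
  by (simp add: orthonormal_fam_sum[OF assms])

lemma orthonormal_fam_tail_norm:
  fixes v :: "nat \<Rightarrow> real^'n"
  assumes "orthonormal_fam v CARD('n)" and "k \<le> CARD('n)"
  shows "(norm (x - (\<Sum>i<k. (v i \<bullet> x) *\<^sub>R v i)))\<^sup>2 = (\<Sum>i\<in>{k..<CARD('n)}. (v i \<bullet> x)\<^sup>2)"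
proof -
  have "(\<Sum>i<CARD('n). (v i \<bullet> x)\<^sup>2) = (\<Sum>i<k. (v i \<bullet> x)\<^sup>2) + (\<Sum>i\<in>{k..<CARD('n)}. (v i \<bullet> x)\<^sup>2)"
    using assms(2) by (simp add: lessThan_atLeast0 sum.atLeastLessThan_concat)
  then show ?thesis
    using orthonormal_fam_bessel_eq[OF orthonormal_fam_mono[OF assms], of x]
      orthonormal_fam_parseval[OF assms(1), of x] by simp
qed

section \<open>Spectral theorem for symmetric matrices\<close>

lemma rayleigh_max_exists:
  fixes M :: "real^'n^'n"
  assumes T: "subspace T" and y: "y \<in> T" "y \<noteq> 0"
  obtains x where "x \<in> T" "x \<bullet> x = 1"
    "\<And>y. y \<in> T \<Longrightarrow> y \<bullet> (M *v y) \<le> (x \<bullet> (M *v x)) * (y \<bullet> y)"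
proof -
  define S where "S = sphere (0::real^'n) 1 \<inter> T"
  have normalized: "y /\<^sub>R norm y \<in> S" if "y \<in> T" "y \<noteq> 0" for y
    using subspace_mul[OF T that(1)] that(2) unfolding S_def by simp
  have "compact S" unfolding S_def using T by (intro compact_Int_closed compact_sphere closed_subspace)
  moreover have "S \<noteq> {}" using normalized[OF y] by blast
  moreover have "continuous_on S (\<lambda>x. x \<bullet> (M *v x))" by (intro continuous_intros)
  ultimately obtain x where x: "x \<in> S" and max: "\<forall>y\<in>S. y \<bullet> (M *v y) \<le> x \<bullet> (M *v x)"
    using continuous_attains_sup[of S "\<lambda>x. x \<bullet> (M *v x)"] by blast
  have "y \<bullet> (M *v y) \<le> (x \<bullet> (M *v x)) * (y \<bullet> y)" if "y \<in> T" for y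
  proof (cases "y = 0")
    case False
    have "(inverse (norm y))\<^sup>2 * (y \<bullet> (M *v y)) \<le> x \<bullet> (M *v x)"
      using bspec[OF max normalized[OF that False]]
      by (simp add: matrix_vector_mult_scaleR power2_eq_square mult.assoc)
    then show ?thesis
      using False by (simp add: field_simps power2_norm_eq_inner[symmetric])
  qed simp
  moreover have "x \<in> T" "x \<bullet> x = 1" using x unfolding S_def by (auto simp: norm_eq_1)
  ultimately show ?thesis using that by blast
qed

lemma rayleigh_max_eigenvector:
  fixes M :: "real^'n^'n"
  assumes sym: "sym_mat M" and T: "subspace T" and inv: "\<And>y. y \<in> T \<Longrightarrow> M *v y \<in> T"
    and x: "x \<in> T" "x \<bullet> x = 1"
    and max: "\<And>y. y \<in> T \<Longrightarrow> y \<bullet> (M *v y) \<le> (x \<bullet> (M *v x)) * (y \<bullet> y)"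
  shows "M *v x = (x \<bullet> (M *v x)) *\<^sub>R x"
proof -
  define m where "m = x \<bullet> (M *v x)"
  define z where "z = M *v x - m *\<^sub>R x"
  have zT: "z \<in> T" unfolding z_def using T x inv by (intro subspace_diff subspace_mul) auto
  have "x \<bullet> z = 0" unfolding z_def m_def using x by (simp add: inner_diff_right)
  then have zx: "z \<bullet> x = 0" by (simp add: inner_commute)
  have zMx: "z \<bullet> (M *v x) = z \<bullet> z"
    using zx unfolding z_def by (simp add: inner_diff_right inner_commute)
  have xMz: "x \<bullet> (M *v z) = z \<bullet> z"
    using zMx sym_mat_inner[OF sym, of x z] by (simp add: inner_commute)
  have "0 \<le> 2 * t * - (z \<bullet> z) + t\<^sup>2 * (m * (z \<bullet> z) - z \<bullet> (M *v z))" for t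
  proof -
    have "x + t *\<^sub>R z \<in> T" using T x zT by (intro subspace_add subspace_mul)
    from max[OF this] have le: "(x + t *\<^sub>R z) \<bullet> (M *v (x + t *\<^sub>R z))
        \<le> m * ((x + t *\<^sub>R z) \<bullet> (x + t *\<^sub>R z))" unfolding m_def .
    have e1: "(x + t *\<^sub>R z) \<bullet> (M *v (x + t *\<^sub>R z)) = m + 2 * t * (z \<bullet> z) + t\<^sup>2 * (z \<bullet> (M *v z))"
      using zMx xMz by (simp add: matrix_vector_right_distrib matrix_vector_mult_scaleR inner_add_left
          inner_add_right m_def power2_eq_square algebra_simps)
    have e2: "(x + t *\<^sub>R z) \<bullet> (x + t *\<^sub>R z) = 1 + t\<^sup>2 * (z \<bullet> z)"
      using x zx by (simp add: inner_add_left inner_add_right inner_commute power2_eq_square algebra_simps)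
    show ?thesis using le unfolding e1 e2 by (simp add: algebra_simps)
  qed
  then have "z \<bullet> z = 0" using linear_plus_square_nonneg_imp_zero by fastforce
  then show ?thesis unfolding z_def m_def by simp
qed

lemma orthogonal_nonzero_exists:
  fixes v :: "nat \<Rightarrow> real^'n"
  assumes "j < CARD('n)"
  obtains y where "y \<noteq> 0" "\<And>l. l < j \<Longrightarrow> v l \<bullet> y = 0"
proof -
  have "dim (v ` {..<j}) \<le> card (v ` {..<j})" by (rule dim_le_card') simp
  also have "\<dots> \<le> j" using card_image_le[of "{..<j}" v] by simp
  finally have dim: "dim (v ` {..<j}) < DIM(real^'n)" using assms by simp
  obtain y where "y \<noteq> 0" and yo: "\<And>w. w \<in> span (v ` {..<j}) \<Longrightarrow> orthogonal y w"
    using orthogonal_to_subspace_exists[OF dim] by blast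
  moreover have "v l \<bullet> y = 0" if "l < j" for l
    using yo[OF span_base[OF imageI]] that unfolding orthogonal_def by (simp add: inner_commute)
  ultimately show ?thesis using that by blast
qed

text \<open>The \<open>j\<close>-th eigenvector maximises the Rayleigh quotient on the orthogonal complement
  of the previous ones; the last conjunct records this and yields the ordering of the eigenvalues.\<close>

lemma partial_spectral_basis:
  fixes M :: "real^'n^'n"
  assumes sym: "sym_mat M" and "j \<le> CARD('n)"
  shows "\<exists>v \<mu>. orthonormal_fam v j \<and> (\<forall>i<j. M *v v i = \<mu> i *\<^sub>R v i) \<and>
     (\<forall>i<j. \<forall>x. (\<forall>l<i. v l \<bullet> x = 0) \<longrightarrow> x \<bullet> (M *v x) \<le> \<mu> i * (x \<bullet> x))"
  using assms(2)
proof (induction j)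
  case 0
  show ?case by (auto simp: orthonormal_fam_def)
next
  case (Suc j)
  then obtain v \<mu> where on: "orthonormal_fam v j" and eig: "\<forall>i<j. M *v v i = \<mu> i *\<^sub>R v i"
    and mx: "\<forall>i<j. \<forall>x. (\<forall>l<i. v l \<bullet> x = 0) \<longrightarrow> x \<bullet> (M *v x) \<le> \<mu> i * (x \<bullet> x)"
    by auto
  define T where "T = {x. \<forall>l<j. v l \<bullet> x = 0}"
  have T: "subspace T" unfolding T_def subspace_def by (auto simp: inner_add_right)
  have inv: "M *v y \<in> T" if "y \<in> T" for y
  proof -
    have "v l \<bullet> (M *v y) = 0" if "l < j" for l
      using sym_mat_inner[OF sym, of "v l" y] eig \<open>y \<in> T\<close> that unfolding T_def by simp
    then show ?thesis unfolding T_def by simp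
  qed
  obtain y where y0: "y \<noteq> 0" and "\<And>l. l < j \<Longrightarrow> v l \<bullet> y = 0"
    using orthogonal_nonzero_exists[of j v] Suc.prems by auto
  then have yT: "y \<in> T" unfolding T_def by simp
  obtain x where x: "x \<in> T" "x \<bullet> x = 1"
    and max: "\<And>y. y \<in> T \<Longrightarrow> y \<bullet> (M *v y) \<le> (x \<bullet> (M *v x)) * (y \<bullet> y)"
    using rayleigh_max_exists[OF T yT y0, where M = M] by blast
  have Mx: "M *v x = (x \<bullet> (M *v x)) *\<^sub>R x"
    by (rule rayleigh_max_eigenvector[OF sym T inv x max])
  show ?case
  proof (intro exI conjI)
    show "orthonormal_fam (v(j := x)) (Suc j)"
      using on x unfolding orthonormal_fam_def T_def by (auto simp: less_Suc_eq inner_commute)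
    show "\<forall>i<Suc j. M *v (v(j := x)) i = (\<mu>(j := x \<bullet> (M *v x))) i *\<^sub>R (v(j := x)) i"
      using eig Mx by (auto simp: less_Suc_eq)
    show "\<forall>i<Suc j. \<forall>y. (\<forall>l<i. (v(j := x)) l \<bullet> y = 0) \<longrightarrow>
        y \<bullet> (M *v y) \<le> (\<mu>(j := x \<bullet> (M *v x))) i * (y \<bullet> y)"
      using mx max unfolding T_def by (auto simp: less_Suc_eq)
  qed
qed

definition spectral_basis :: "real^'n^'n \<Rightarrow> (nat \<Rightarrow> real^'n) \<Rightarrow> (nat \<Rightarrow> real) \<Rightarrow> bool" where
  "spectral_basis M v \<mu> \<longleftrightarrow> orthonormal_fam v CARD('n) \<and>
     (\<forall>i<CARD('n). M *v v i = \<mu> i *\<^sub>R v i) \<and> (\<forall>i j. i \<le> j \<longrightarrow> j < CARD('n) \<longrightarrow> \<mu> j \<le> \<mu> i)"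

theorem sym_mat_spectral_basis:
  fixes M :: "real^'n^'n"
  assumes "sym_mat M"
  obtains v \<mu> where "spectral_basis M v \<mu>"
proof -
  obtain v \<mu> where on: "orthonormal_fam v CARD('n)" and eig: "\<forall>i<CARD('n). M *v v i = \<mu> i *\<^sub>R v i"
    and mx: "\<forall>i<CARD('n). \<forall>x. (\<forall>l<i. v l \<bullet> x = 0) \<longrightarrow> x \<bullet> (M *v x) \<le> \<mu> i * (x \<bullet> x)"
    using partial_spectral_basis[OF assms order.refl] by blast
  have "\<mu> j \<le> \<mu> i" if "i \<le> j" "j < CARD('n)" for i j
  proof -
    have "\<forall>l<i. v l \<bullet> v j = 0" using on that unfolding orthonormal_fam_def by auto
    then have "v j \<bullet> (M *v v j) \<le> \<mu> i * (v j \<bullet> v j)" using mx that by auto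
    then show ?thesis using eig on that unfolding orthonormal_fam_def by simp
  qed
  then show ?thesis using that on eig unfolding spectral_basis_def by blast
qed

lemma spectral_basis_eigenvalue:
  fixes M :: "real^'n^'n"
  assumes "spectral_basis M v \<mu>" and "i < CARD('n)"
  shows "v i \<bullet> (M *v v i) = \<mu> i"
  using assms unfolding spectral_basis_def orthonormal_fam_def by simp

lemma spectral_basis_apply:
  fixes M :: "real^'n^'n"
  assumes "spectral_basis M v \<mu>"
  shows "M *v x = (\<Sum>i<CARD('n). (\<mu> i * (v i \<bullet> x)) *\<^sub>R v i)"
proof -
  have on: "orthonormal_fam v CARD('n)" using assms unfolding spectral_basis_def by simp
  have "M *v x = M *v (\<Sum>i<CARD('n). (v i \<bullet> x) *\<^sub>R v i)"
    using orthonormal_fam_expand[OF on, of x] by simp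
  also have "\<dots> = (\<Sum>i<CARD('n). (\<mu> i * (v i \<bullet> x)) *\<^sub>R v i)"
    using assms unfolding spectral_basis_def
    by (simp add: linear_sum[OF matrix_vector_mul_linear] matrix_vector_mult_scaleR mult.commute)
  finally show ?thesis .
qed

lemma spectral_basis_quad:
  fixes M :: "real^'n^'n"
  assumes "spectral_basis M v \<mu>"
  shows "x \<bullet> (M *v x) = (\<Sum>i<CARD('n). \<mu> i * (v i \<bullet> x)\<^sup>2)"
  unfolding spectral_basis_apply[OF assms]
  by (simp add: inner_sum_right power2_eq_square inner_commute mult_ac)

lemma spectral_basis_min_le_quad:
  fixes M :: "real^'n^'n"
  assumes "spectral_basis M v \<mu>"
  shows "\<mu> (CARD('n) - 1) * (x \<bullet> x) \<le> x \<bullet> (M *v x)"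
proof -
  have on: "orthonormal_fam v CARD('n)" using assms unfolding spectral_basis_def by simp
  have "\<mu> (CARD('n) - 1) * (x \<bullet> x) = (\<Sum>i<CARD('n). \<mu> (CARD('n) - 1) * (v i \<bullet> x)\<^sup>2)"
    by (simp add: orthonormal_fam_parseval[OF on] sum_distrib_left)
  also have "\<dots> \<le> (\<Sum>i<CARD('n). \<mu> i * (v i \<bullet> x)\<^sup>2)"
    using assms unfolding spectral_basis_def by (intro sum_mono mult_right_mono) auto
  finally show ?thesis by (simp add: spectral_basis_quad[OF assms])
qed

lemma spectral_basis_trace:
  fixes M :: "real^'n^'n"
  assumes "spectral_basis M v \<mu>" and B: "orthonormal_set B" "span B = UNIV"
  shows "(\<Sum>b\<in>B. b \<bullet> (M *v b)) = (\<Sum>i<CARD('n). \<mu> i)"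
proof -
  have "(\<Sum>b\<in>B. b \<bullet> (M *v b)) = (\<Sum>b\<in>B. \<Sum>i<CARD('n). \<mu> i * (v i \<bullet> b)\<^sup>2)"
    by (simp add: spectral_basis_quad[OF assms(1)])
  also have "\<dots> = (\<Sum>i<CARD('n). \<mu> i * (\<Sum>b\<in>B. (b \<bullet> v i)\<^sup>2))"
    by (subst sum.swap) (simp add: sum_distrib_left inner_commute)
  also have "\<dots> = (\<Sum>i<CARD('n). \<mu> i)"
    using assms(1) unfolding spectral_basis_def orthonormal_fam_def
    by (simp add: orthonormal_set_parseval[OF B, symmetric])
  finally show ?thesis .
qed

lemma sum_weighted_le_sum_prefix:
  fixes \<mu> w :: "nat \<Rightarrow> real"
  assumes "p \<le> n" and w: "\<And>i. i < n \<Longrightarrow> 0 \<le> w i \<and> w i \<le> 1" and wsum: "(\<Sum>i<n. w i) = p"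
    and dec: "\<And>i j. i \<le> j \<Longrightarrow> j < n \<Longrightarrow> \<mu> j \<le> \<mu> i"
  shows "(\<Sum>i<n. \<mu> i * w i) \<le> (\<Sum>i<p. \<mu> i)"
proof -
  define t where "t = \<mu> (min p (n - 1))"
  have "(\<Sum>i<n. \<mu> i * w i) \<le> (\<Sum>i<n. t * w i + (if i < p then \<mu> i - t else 0))"
  proof (intro sum_mono)
    fix i assume i: "i \<in> {..<n}"
    show "\<mu> i * w i \<le> t * w i + (if i < p then \<mu> i - t else 0)"
    proof (cases "i < p")
      case True
      then have "0 \<le> (\<mu> i - t) * (1 - w i)"
        using i w[of i] dec[of i "min p (n - 1)"] \<open>p \<le> n\<close> unfolding t_def by simp
      then show ?thesis using True by (simp add: algebra_simps)
    next
      case False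
      then have "\<mu> i \<le> t" using i dec unfolding t_def by simp
      then show ?thesis using False i w[of i] by (simp add: mult_right_mono)
    qed
  qed
  also have "\<dots> = t * p + (\<Sum>i<p. \<mu> i - t)"
  proof -
    have "{..<n} \<inter> {i. i < p} = {..<p}" using \<open>p \<le> n\<close> by auto
    then show ?thesis by (simp add: sum.distrib sum_distrib_left[symmetric] wsum sum.If_cases)
  qed
  finally show ?thesis by (simp add: sum_subtractf)
qed

theorem spectral_basis_ky_fan:
  fixes M :: "real^'n^'n"
  assumes "spectral_basis M v \<mu>" and B: "orthonormal_set B"
  shows "(\<Sum>b\<in>B. b \<bullet> (M *v b)) \<le> (\<Sum>i<card B. \<mu> i)"
proof -
  have on: "orthonormal_fam v CARD('n)" using assms unfolding spectral_basis_def by simp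
  define w where "w i = (\<Sum>b\<in>B. (b \<bullet> v i)\<^sup>2)" for i
  have "(\<Sum>b\<in>B. b \<bullet> (M *v b)) = (\<Sum>b\<in>B. \<Sum>i<CARD('n). \<mu> i * (v i \<bullet> b)\<^sup>2)"
    by (simp add: spectral_basis_quad[OF assms(1)])
  also have "\<dots> = (\<Sum>i<CARD('n). \<mu> i * w i)"
    unfolding w_def by (subst sum.swap) (simp add: sum_distrib_left inner_commute)
  also have "\<dots> \<le> (\<Sum>i<card B. \<mu> i)"
  proof (rule sum_weighted_le_sum_prefix)
    show "card B \<le> CARD('n)" by (rule orthonormal_set_finite_card[OF B])
    show "0 \<le> w i \<and> w i \<le> 1" if "i < CARD('n)" for i
      using orthonormal_set_bessel[OF B, of "v i"] on that
      unfolding w_def orthonormal_fam_def by (simp add: sum_nonneg)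
    have "(\<Sum>i<CARD('n). w i) = (\<Sum>b\<in>B. b \<bullet> b)"
      unfolding w_def by (subst sum.swap) (simp add: orthonormal_fam_parseval[OF on] inner_commute)
    also have "\<dots> = card B" using B by (simp add: orthonormal_set_inner)
    finally show "(\<Sum>i<CARD('n). w i) = card B" .
    show "\<And>i j. i \<le> j \<Longrightarrow> j < CARD('n) \<Longrightarrow> \<mu> j \<le> \<mu> i"
      using assms(1) unfolding spectral_basis_def by blast
  qed
  finally show ?thesis .
qed

lemma sum_prefix_le:
  fixes \<mu> :: "nat \<Rightarrow> real" and r :: nat
  assumes "p \<le> r + k" "p \<le> n" "k < n"
    and nonneg: "\<And>i. i < n \<Longrightarrow> 0 \<le> \<mu> i" and dec: "\<And>i j. i \<le> j \<Longrightarrow> j < n \<Longrightarrow> \<mu> j \<le> \<mu> i"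
  shows "(\<Sum>i<p. \<mu> i) \<le> (\<Sum>i<k. \<mu> i) + real r * \<mu> k"
proof -
  have "(\<Sum>i<p. \<mu> i) = (\<Sum>i\<in>{..<p} \<inter> {..<k}. \<mu> i) + (\<Sum>i\<in>{..<p} - {..<k}. \<mu> i)"
    by (rule sum.Int_Diff) simp
  also have "(\<Sum>i\<in>{..<p} \<inter> {..<k}. \<mu> i) \<le> (\<Sum>i<k. \<mu> i)"
    using assms by (intro sum_mono2) auto
  also have "(\<Sum>i\<in>{..<p} - {..<k}. \<mu> i) \<le> card ({..<p} - {..<k}) * \<mu> k"
    using assms by (intro sum_bounded_above) auto
  also have "\<dots> \<le> real r * \<mu> k"
    using assms by (intro mult_right_mono) (auto simp: card_Diff_subset)
  finally show ?thesis by simp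
qed

lemma spectral_basis_sum_tail_le:
  fixes M :: "real^'n^'n"
  assumes "spectral_basis M v \<mu>" and nonneg: "\<And>i. i < CARD('n) \<Longrightarrow> 0 \<le> \<mu> i" and "k < CARD('n)"
    and B': "orthonormal_set B'" "span B' = UNIV" and "B \<subseteq> B'" and "card B \<le> r + k"
  shows "(\<Sum>i\<in>{k..<CARD('n)}. \<mu> i) \<le> (\<Sum>b\<in>B' - B. b \<bullet> (M *v b)) + real r * \<mu> k"
proof -
  have B: "orthonormal_set B" by (rule orthonormal_set_subset[OF B'(1) \<open>B \<subseteq> B'\<close>])
  have "(\<Sum>i<CARD('n). \<mu> i) = (\<Sum>b\<in>B' - B. b \<bullet> (M *v b)) + (\<Sum>b\<in>B. b \<bullet> (M *v b))"
    using spectral_basis_trace[OF assms(1) B'] orthonormal_set_finite_card(1)[OF B'(1)] \<open>B \<subseteq> B'\<close>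
    by (simp add: sum.subset_diff)
  also have "(\<Sum>b\<in>B. b \<bullet> (M *v b)) \<le> (\<Sum>i<card B. \<mu> i)"
    by (rule spectral_basis_ky_fan[OF assms(1) B])
  also have "\<dots> \<le> (\<Sum>i<k. \<mu> i) + real r * \<mu> k"
    using assms(1) orthonormal_set_finite_card(2)[OF B] unfolding spectral_basis_def
    by (intro sum_prefix_le[OF \<open>card B \<le> r + k\<close> _ \<open>k < CARD('n)\<close> nonneg]) auto
  finally have "(\<Sum>i<CARD('n). \<mu> i) \<le> (\<Sum>b\<in>B' - B. b \<bullet> (M *v b)) + ((\<Sum>i<k. \<mu> i) + real r * \<mu> k)"
    by simp
  moreover have "(\<Sum>i<CARD('n). \<mu> i) = (\<Sum>i<k. \<mu> i) + (\<Sum>i\<in>{k..<CARD('n)}. \<mu> i)"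
    using \<open>k < CARD('n)\<close> by (simp add: lessThan_atLeast0 sum.atLeastLessThan_concat)
  ultimately show ?thesis by linarith
qed

section \<open>Eigenvalues and the matrix square root\<close>

definition spectral_matrix :: "(nat \<Rightarrow> real^'n) \<Rightarrow> (nat \<Rightarrow> real) \<Rightarrow> real^'n^'n" where
  "spectral_matrix v c = (\<chi> r s. \<Sum>i<CARD('n). c i * v i $ r * v i $ s)"

lemma spectral_matrix_apply:
  fixes v :: "nat \<Rightarrow> real^'n"
  shows "spectral_matrix v c *v x = (\<Sum>i<CARD('n). (c i * (v i \<bullet> x)) *\<^sub>R v i)"
proof -
  have "(spectral_matrix v c *v x) $ r = (\<Sum>i<CARD('n). (c i * (v i \<bullet> x)) *\<^sub>R v i) $ r" for r
  proof -
    have "(spectral_matrix v c *v x) $ r = (\<Sum>s\<in>UNIV. \<Sum>i<CARD('n). c i * v i $ r * v i $ s * x $ s)"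
      by (simp add: spectral_matrix_def matrix_vector_mult_def sum_distrib_right)
    also have "\<dots> = (\<Sum>i<CARD('n). (c i * (v i \<bullet> x)) *\<^sub>R v i) $ r"
      by (subst sum.swap) (simp add: inner_vec_def sum_distrib_left mult_ac)
    finally show ?thesis .
  qed
  then show ?thesis by (simp add: vec_eq_iff)
qed

lemma sym_mat_spectral_matrix: "sym_mat (spectral_matrix v c :: real^'n^'n)"
  unfolding sym_mat_def spectral_matrix_def transpose_def by (simp add: vec_eq_iff mult_ac)

lemma spectral_basis_eq_spectral_matrix:
  fixes M :: "real^'n^'n"
  assumes "spectral_basis M v \<mu>" shows "M = spectral_matrix v \<mu>"
  by (simp add: matrix_eq spectral_matrix_apply spectral_basis_apply[OF assms])

lemma spectral_matrix_one:
  fixes v :: "nat \<Rightarrow> real^'n"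
  assumes "orthonormal_fam v CARD('n)" shows "spectral_matrix v (\<lambda>_. 1) = mat 1"
  by (simp add: matrix_eq spectral_matrix_apply orthonormal_fam_expand[OF assms, symmetric])

lemma spectral_matrix_mult:
  fixes v :: "nat \<Rightarrow> real^'n"
  assumes "orthonormal_fam v CARD('n)"
  shows "spectral_matrix v c ** spectral_matrix v d = spectral_matrix v (\<lambda>i. c i * d i)"
proof -
  have "spectral_matrix v c *v (spectral_matrix v d *v x) = spectral_matrix v (\<lambda>i. c i * d i) *v x" for x
    unfolding spectral_matrix_apply
    by (intro sum.cong refl) (simp add: orthonormal_fam_coeff[OF assms] mult.assoc)
  then show ?thesis by (simp add: matrix_eq matrix_vector_mul_assoc[symmetric])
qed

lemma spectral_matrix_cong:
  assumes "\<And>i. i < CARD('n) \<Longrightarrow> c i = d i"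
  shows "spectral_matrix v c = (spectral_matrix v d :: real^'n^'n)"
proof -
  have "(\<Sum>i<CARD('n). c i * v i $ r * v i $ s) = (\<Sum>i<CARD('n). d i * v i $ r * v i $ s)" for r s
    using assms by (intro sum.cong) auto
  then show ?thesis by (simp add: spectral_matrix_def)
qed

lemma orthonormal_fam_matrix_eq:
  fixes A B :: "real^'n^'n"
  assumes "orthonormal_fam r CARD('n)" and "\<And>j. j < CARD('n) \<Longrightarrow> A *v r j = B *v r j"
  shows "A = B"
proof -
  have "A *v x = B *v x" for x
  proof -
    have "A *v x = (\<Sum>j<CARD('n). (r j \<bullet> x) *\<^sub>R (A *v r j))"
      by (subst orthonormal_fam_expand[OF assms(1), of x])
        (simp add: linear_sum[OF matrix_vector_mul_linear] matrix_vector_mult_scaleR)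
    also have "\<dots> = (\<Sum>j<CARD('n). (r j \<bullet> x) *\<^sub>R (B *v r j))"
      using assms(2) by simp
    also have "\<dots> = B *v x"
      by (subst (2) orthonormal_fam_expand[OF assms(1), of x])
        (simp add: linear_sum[OF matrix_vector_mul_linear] matrix_vector_mult_scaleR)
    finally show ?thesis .
  qed
  then show ?thesis by (simp add: matrix_eq)
qed

lemma const_poly_sum: "[:sum f A:] = (\<Sum>x\<in>A. [:f x:])"
proof (induction A rule: infinite_finite_induct)
  case (insert x F)
  then show ?case by (simp flip: insert.IH)
qed simp_all

text \<open>Conjugating \<open>X I - M\<close> by the (polynomial) eigenvector matrix diagonalises it.\<close>

lemma char_poly_spectral_basis:
  fixes M :: "real^'n^'n"
  assumes "spectral_basis M v \<mu>"
  shows "char_poly_mat M = (\<Prod>i<CARD('n). [:- \<mu> i, 1:])"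
proof -
  let ?n = "CARD('n)"
  have on: "orthonormal_fam v ?n" using assms unfolding spectral_basis_def by simp
  obtain \<psi> :: "'n \<Rightarrow> nat" where bij: "bij_betw \<psi> UNIV {..<?n}"
    using ex_bij_betw_finite_nat[of "UNIV :: 'n set"] by (auto simp: atLeast0LessThan)
  define X :: "real poly" where "X = [:0, 1:]"
  define Q :: "real poly^'n^'n" where "Q = (\<chi> r c. [: v (\<psi> c) $ r :])"
  define D :: "real poly^'n^'n" where "D = (\<chi> r c. if r = c then X - [: \<mu> (\<psi> c) :] else 0)"
  have reindex: "(\<Sum>c\<in>UNIV. g (\<psi> c)) = (\<Sum>i<?n. g i)" for g :: "nat \<Rightarrow> real"
    using sum.reindex_bij_betw[OF bij] .
  have orth: "(\<Sum>c\<in>UNIV. v (\<psi> c) $ r * v (\<psi> c) $ s) = (if r = s then 1 else 0)" for r s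
    using arg_cong[OF spectral_matrix_one[OF on], of "\<lambda>A. A $ r $ s"]
    unfolding reindex[of "\<lambda>i. v i $ r * v i $ s"] by (simp add: spectral_matrix_def mat_def)
  have entries: "(\<Sum>c\<in>UNIV. \<mu> (\<psi> c) * v (\<psi> c) $ r * v (\<psi> c) $ s) = M $ r $ s" for r s
    using arg_cong[OF spectral_basis_eq_spectral_matrix[OF assms], of "\<lambda>A. A $ r $ s"]
    unfolding reindex[of "\<lambda>i. \<mu> i * v i $ r * v i $ s"] by (simp add: spectral_matrix_def)
  have "(Q ** transpose Q) $ r $ s = (mat 1 :: real poly^'n^'n) $ r $ s" for r s
    by (simp add: matrix_matrix_mult_def Q_def transpose_def mult_to_poly const_poly_sum[symmetric]
        orth mat_def)
  then have QQ: "Q ** transpose Q = mat 1" by (simp add: vec_eq_iff)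
  have "(Q ** D ** transpose Q) $ r $ s = (if r = s then X else 0) - [: M $ r $ s :]" for r s
  proof -
    have "(Q ** D ** transpose Q) $ r $ s =
        (\<Sum>c\<in>UNIV. smult (v (\<psi> c) $ r * v (\<psi> c) $ s) X - [: \<mu> (\<psi> c) * v (\<psi> c) $ r * v (\<psi> c) $ s :])"
      by (simp add: matrix_matrix_mult_def Q_def D_def transpose_def if_distrib sum.delta
          smult_diff_right mult_ac cong: if_cong)
    also have "\<dots> = (if r = s then X else 0) - [: M $ r $ s :]"
      by (simp add: sum_subtractf smult_sum[symmetric] const_poly_sum[symmetric] orth entries)
    finally show ?thesis .
  qed
  then have CM: "(\<chi> i j. (if i = j then [:0, 1:] else 0) - [: M $ i $ j :]) = Q ** D ** transpose Q"
    by (simp add: vec_eq_iff X_def)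
  have "det D = (\<Prod>c\<in>UNIV. X - [: \<mu> (\<psi> c) :])"
    by (subst det_diagonal) (auto simp: D_def)
  also have "\<dots> = (\<Prod>i<?n. [: - \<mu> i, 1 :])"
    using prod.reindex_bij_betw[OF bij, of "\<lambda>i. X - [: \<mu> i :]"] by (simp add: X_def)
  finally have "det D = (\<Prod>i<?n. [: - \<mu> i, 1 :])" .
  moreover have "det Q * det (transpose Q) = 1"
    using arg_cong[OF QQ, of det] by (simp add: det_mul)
  ultimately show ?thesis
    unfolding char_poly_mat_def CM by (simp add: det_mul mult_ac)
qed

lemma eig_desc_spectral_basis:
  fixes M :: "real^'n^'n"
  assumes "spectral_basis M v \<mu>" and "1 \<le> i" "i \<le> CARD('n)"
  shows "eig_desc M i = \<mu> (i - 1)"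
proof -
  define L where "L = map \<mu> [0..<CARD('n)]"
  have "eigenvalues_mset M = (\<Sum>i<CARD('n). {#\<mu> i#})"
    by (simp add: eigenvalues_mset_def char_poly_spectral_basis[OF assms(1)] proots_prod)
  also have "\<dots> = mset (rev L)"
  proof -
    have "(\<Sum>i<N. {#\<mu> i#}) = mset (map \<mu> [0..<N])" for N by (induction N) simp_all
    then show ?thesis unfolding L_def by simp
  qed
  finally have "eigenvalues_mset M = mset (rev L)" .
  moreover have "sorted (rev L)"
    using assms(1) unfolding sorted_iff_nth_mono spectral_basis_def L_def by (auto simp: rev_nth)
  ultimately have "sorted_list_of_multiset (eigenvalues_mset M) = rev L"
    by (simp add: properties_for_sort)
  then show ?thesis using assms(2,3) unfolding eig_desc_def L_def by simp
qed

lemma eig_desc_last_le_quad: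
  fixes M :: "real^'n^'n"
  assumes "sym_mat M"
  shows "eig_desc M CARD('n) * (x \<bullet> x) \<le> x \<bullet> (M *v x)"
proof -
  obtain v \<mu> where "spectral_basis M v \<mu>" using sym_mat_spectral_basis[OF assms] .
  then show ?thesis
    using spectral_basis_min_le_quad eig_desc_spectral_basis[of M v \<mu> "CARD('n)"] by simp
qed

lemma spectral_basis_eigenvalue_le_quad:
  fixes D V :: "real^'n^'n"
  assumes "spectral_basis D v \<mu>" and "sym_mat V" and "k < CARD('n)"
    and "eig_desc D (k + 1) \<le> eig_desc V CARD('n)" and "norm b = 1"
  shows "\<mu> k \<le> b \<bullet> (V *v b)"
  using eig_desc_spectral_basis[OF assms(1), of "k + 1"] eig_desc_last_le_quad[OF assms(2), of b] assms(3-5)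
  by (simp add: norm_eq_1)

text \<open>An eigenvector of \<open>R\<close> for \<open>\<rho>\<close> only has components along eigenvectors of \<open>\<Omega>\<close>
  for \<open>\<rho>\<^sup>2\<close>, on which the spectral square root acts as \<open>\<rho>\<close> too.\<close>

lemma psd_root_unique:
  fixes \<Omega> R :: "real^'n^'n"
  assumes \<Omega>: "spectral_basis \<Omega> v \<omega>" and nonneg: "\<And>i. i < CARD('n) \<Longrightarrow> 0 \<le> \<omega> i"
    and R: "psd_mat R" "R ** R = \<Omega>"
  shows "R = spectral_matrix v (\<lambda>i. sqrt (\<omega> i))"
proof -
  have on: "orthonormal_fam v CARD('n)" using \<Omega> unfolding spectral_basis_def by simp
  have sym\<Omega>: "sym_mat \<Omega>" using \<Omega> sym_mat_spectral_matrix spectral_basis_eq_spectral_matrix by metis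
  obtain r \<rho> where r: "spectral_basis R r \<rho>"
    using sym_mat_spectral_basis R(1) unfolding psd_mat_def by blast
  have onr: "orthonormal_fam r CARD('n)" using r unfolding spectral_basis_def by simp
  have "R *v r j = spectral_matrix v (\<lambda>i. sqrt (\<omega> i)) *v r j" if j: "j < CARD('n)" for j
  proof -
    have Rr: "R *v r j = \<rho> j *\<^sub>R r j" using r j unfolding spectral_basis_def by simp
    have "0 \<le> r j \<bullet> (R *v r j)" using R(1) unfolding psd_mat_def by blast
    then have \<rho>: "0 \<le> \<rho> j" using onr j unfolding Rr orthonormal_fam_def by simp
    have \<Omega>r: "\<Omega> *v r j = (\<rho> j)\<^sup>2 *\<^sub>R r j"
      using Rr R(2) by (metis matrix_vector_mul_assoc matrix_vector_mult_scaleR power2_eq_square scaleR_scaleR)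
    have key: "sqrt (\<omega> i) * (v i \<bullet> r j) = \<rho> j * (v i \<bullet> r j)" if i: "i < CARD('n)" for i
    proof (cases "v i \<bullet> r j = 0")
      case False
      have "\<omega> i * (v i \<bullet> r j) = (\<rho> j)\<^sup>2 * (v i \<bullet> r j)"
        using sym_mat_inner[OF sym\<Omega>, of "v i" "r j"] \<Omega> i \<Omega>r unfolding spectral_basis_def by simp
      then have "sqrt (\<omega> i) = \<rho> j" using False \<rho> by simp
      then show ?thesis by simp
    qed simp
    have "spectral_matrix v (\<lambda>i. sqrt (\<omega> i)) *v r j = (\<Sum>i<CARD('n). (\<rho> j * (v i \<bullet> r j)) *\<^sub>R v i)"
      unfolding spectral_matrix_apply by (intro sum.cong refl) (simp add: key)
    also have "\<dots> = \<rho> j *\<^sub>R (\<Sum>i<CARD('n). (v i \<bullet> r j) *\<^sub>R v i)"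
      by (simp add: scaleR_sum_right)
    finally show ?thesis using Rr orthonormal_fam_expand[OF on, of "r j"] by simp
  qed
  then show ?thesis by (rule orthonormal_fam_matrix_eq[OF onr])
qed

lemma mat_sqrt:
  fixes \<Omega> :: "real^'n^'n"
  assumes "psd_mat \<Omega>"
  shows "psd_mat (mat_sqrt \<Omega>)" and "mat_sqrt \<Omega> ** mat_sqrt \<Omega> = \<Omega>"
proof -
  obtain v \<omega> where \<Omega>: "spectral_basis \<Omega> v \<omega>"
    using sym_mat_spectral_basis assms unfolding psd_mat_def by blast
  have on: "orthonormal_fam v CARD('n)" using \<Omega> unfolding spectral_basis_def by simp
  have nonneg: "0 \<le> \<omega> i" if "i < CARD('n)" for i
  proof -
    have "0 \<le> v i \<bullet> (\<Omega> *v v i)" using assms unfolding psd_mat_def by blast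
    then show ?thesis using \<Omega> that unfolding spectral_basis_def orthonormal_fam_def by simp
  qed
  define R where "R = spectral_matrix v (\<lambda>i. sqrt (\<omega> i))"
  have quad: "x \<bullet> (R *v x) = (\<Sum>i<CARD('n). sqrt (\<omega> i) * (v i \<bullet> x)\<^sup>2)" for x
    unfolding R_def spectral_matrix_apply
    by (simp add: inner_sum_right inner_commute power2_eq_square mult_ac)
  have "0 \<le> x \<bullet> (R *v x)" for x unfolding quad using nonneg by (intro sum_nonneg) simp
  then have psd: "psd_mat R"
    unfolding psd_mat_def by (simp add: R_def sym_mat_spectral_matrix)
  have sq: "R ** R = \<Omega>"
    unfolding R_def spectral_matrix_mult[OF on] spectral_basis_eq_spectral_matrix[OF \<Omega>]
    by (intro spectral_matrix_cong) (simp add: nonneg)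
  have "mat_sqrt \<Omega> = R"
    unfolding mat_sqrt_def
  proof (rule the_equality)
    show "psd_mat R \<and> R ** R = \<Omega>" using psd sq by simp
    show "R' = R" if "psd_mat R' \<and> R' ** R' = \<Omega>" for R'
      using psd_root_unique[OF \<Omega> nonneg] that unfolding R_def by blast
  qed
  then show "psd_mat (mat_sqrt \<Omega>)" "mat_sqrt \<Omega> ** mat_sqrt \<Omega> = \<Omega>" using psd sq by simp_all
qed

section \<open>Whitening the agent's problem\<close>

lemma mat_sqrt_pos_def:
  fixes \<Omega> :: "real^'n^'n"
  assumes "pos_def_mat \<Omega>"
  shows "sym_mat (mat_sqrt \<Omega>)" "mat_sqrt \<Omega> ** mat_sqrt \<Omega> = \<Omega>" "invertible (mat_sqrt \<Omega>)"
proof -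
  let ?R = "mat_sqrt \<Omega>"
  show R: "sym_mat ?R" "?R ** ?R = \<Omega>"
    using mat_sqrt[OF pos_def_mat_imp_psd_mat[OF assms]] unfolding psd_mat_def by blast+
  have "inj ((*v) ?R)"
  proof (rule injI)
    fix x y assume "?R *v x = ?R *v y"
    then have "quad \<Omega> (x - y) = 0" by (simp add: quad_eq_norm_root[OF R] matrix_vector_mult_diff_distrib)
    then show "x = y" using assms unfolding pos_def_mat_def quad_def by (metis less_irrefl right_minus_eq)
  qed
  then show "invertible ?R"
    unfolding invertible_eq_bij by (simp add: bij_def linear_inj_imp_surj[OF matrix_vector_mul_linear])
qed

lemma matrix_inv:
  assumes "invertible R"
  shows "R ** matrix_inv R = mat 1" and "matrix_inv R ** R = mat 1"
  using someI_ex[OF assms[unfolded invertible_def]] unfolding matrix_inv_def by auto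

lemma feasible_set_closed: "closed (feasible_set k E es m A a)"
proof -
  have "feasible_set k E es m A a = (\<Inter>i<k. {f. E i \<bullet> f = es i}) \<inter> (\<Inter>j<m. {f. A j \<bullet> f = a j})"
    unfolding feasible_set_def by auto
  then show ?thesis by (simp add: closed_INT closed_hyperplane closed_Int)
qed

lemma feasible_set_convex: "convex (feasible_set k E es m A a)"
  unfolding feasible_set_def convex_def by (simp add: inner_add_right flip: distrib_right)

lemma feasible_set_linear_image:
  fixes R Ri :: "real^'n^'n"
  assumes "R ** Ri = mat 1" and "Ri ** R = mat 1"
  shows "(*v) R ` feasible_set k E es m A a = feasible_set k (\<lambda>i. E i v* Ri) es m (\<lambda>j. A j v* Ri) a"
proof -
  have RRi: "R *v (Ri *v x) = x" and RiR: "Ri *v (R *v x) = x" for x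
    using assms by (simp_all add: matrix_vector_mul_assoc)
  show ?thesis
  proof (intro set_eqI iffI)
    fix x assume "x \<in> (*v) R ` feasible_set k E es m A a"
    then show "x \<in> feasible_set k (\<lambda>i. E i v* Ri) es m (\<lambda>j. A j v* Ri) a"
      unfolding feasible_set_def by (auto simp: dot_lmul_matrix RiR)
  next
    fix x assume "x \<in> feasible_set k (\<lambda>i. E i v* Ri) es m (\<lambda>j. A j v* Ri) a"
    then show "x \<in> (*v) R ` feasible_set k E es m A a"
      unfolding feasible_set_def by (intro image_eqI[of _ _ "Ri *v x"]) (auto simp: RRi dot_lmul_matrix)
  qed
qed

lemma closest_point_eqI:
  fixes S :: "'a::{real_inner,heine_borel} set"
  assumes "convex S" "closed S" "p \<in> S" and obtuse: "\<And>x. x \<in> S \<Longrightarrow> (y - p) \<bullet> (x - p) \<le> 0"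
  shows "closest_point S y = p"
proof (rule closest_point_unique[symmetric, OF assms(1-3)], intro ballI)
  fix x assume "x \<in> S"
  have "(dist y x)\<^sup>2 = (dist y p)\<^sup>2 - 2 * ((y - p) \<bullet> (x - p)) + (norm (x - p))\<^sup>2"
    unfolding dist_norm power2_norm_eq_inner
    by (simp add: inner_diff_left inner_diff_right inner_commute algebra_simps)
  then have "(dist y p)\<^sup>2 \<le> (dist y x)\<^sup>2"
    using obtuse[OF \<open>x \<in> S\<close>] zero_le_power2[of "norm (x - p)"] by linarith
  then show "dist y p \<le> dist y x" by (simp add: power2_le_iff_abs_le)
qed

text \<open>With \<open>R\<^sup>2 = \<Omega>\<close> the agent's utility is minus the squared distance from \<open>R f\<close> to
  \<open>R u\<close>.\<close>

lemma agent_choice_whitened: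
  fixes R \<Omega> :: "real^'n^'n"
  assumes R: "sym_mat R" "R ** R = \<Omega>" "invertible R"
    and F: "convex F" "closed F" "F \<noteq> {}"
  shows "agent_choice \<Omega> u F \<in> F" and "R *v agent_choice \<Omega> u F = closest_point ((*v) R ` F) (R *v u)"
proof -
  let ?S = "(*v) R ` F"
  have inj: "inj ((*v) R)" by (rule inj_matrix_vector_mult[OF R(3)])
  have S: "convex ?S" "closed ?S" "?S \<noteq> {}"
    using convex_linear_image[OF matrix_vector_mul_linear F(1)]
      closed_injective_linear_image[OF F(2) matrix_vector_mul_linear inj] F(3)
    by simp_all
  have "closest_point ?S (R *v u) \<in> ?S" by (rule closest_point_in_set[OF S(2,3)])
  then obtain f0 where f0: "f0 \<in> F" "R *v f0 = closest_point ?S (R *v u)" by auto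
  have quad: "quad \<Omega> (g - u) = (dist (R *v u) (R *v g))\<^sup>2" for g
    by (simp add: quad_eq_norm_root[OF R(1,2)] dist_norm norm_minus_commute matrix_vector_mult_diff_distrib)
  have "agent_choice \<Omega> u F = f0"
    unfolding agent_choice_def
  proof (rule the_equality)
    show "f0 \<in> F \<and> (\<forall>g\<in>F. - quad \<Omega> (g - u) \<le> - quad \<Omega> (f0 - u))"
      using f0 closest_point_le[OF S(2)] by (auto simp: quad power2_le_iff_abs_le)
    fix f1 assume f1: "f1 \<in> F \<and> (\<forall>g\<in>F. - quad \<Omega> (g - u) \<le> - quad \<Omega> (f1 - u))"
    then have "\<forall>z\<in>?S. dist (R *v u) (R *v f1) \<le> dist (R *v u) z"
      by (auto simp: quad power2_le_iff_abs_le)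
    moreover have "R *v f1 \<in> ?S" using f1 by simp
    ultimately have "R *v f1 = R *v f0"
      unfolding f0(2) by (intro closest_point_unique[OF S(1,2)])
    then show "f1 = f0" using inj by (simp add: inj_eq)
  qed
  then show "agent_choice \<Omega> u F \<in> F" "R *v agent_choice \<Omega> u F = closest_point ?S (R *v u)"
    using f0 by simp_all
qed

lemma closest_point_feasible_free_direction:
  assumes "feasible_set k E es m A a \<noteq> {}"
    and "\<And>i. i < k \<Longrightarrow> E i \<bullet> b = 0" and "\<And>j. j < m \<Longrightarrow> A j \<bullet> b = 0"
  shows "b \<bullet> closest_point (feasible_set k E es m A a) y = b \<bullet> y"
proof -
  let ?F = "feasible_set k E es m A a"
  let ?p = "closest_point ?F y"
  have "?p \<in> ?F" by (rule closest_point_in_set[OF feasible_set_closed assms(1)])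
  then have "?p + b \<in> ?F" "?p - b \<in> ?F"
    using assms(2,3) unfolding feasible_set_def by (simp_all add: inner_add_right inner_diff_right)
  then have "(y - ?p) \<bullet> b \<le> 0" "(y - ?p) \<bullet> (- b) \<le> 0"
    using closest_point_dot[OF feasible_set_convex feasible_set_closed, of _ k E es m A a y] by force+
  then have "(y - ?p) \<bullet> b = 0" by simp
  then show ?thesis by (simp add: inner_diff_left inner_commute[of b])
qed

lemma closest_point_orthonormal_constraints:
  assumes "orthonormal_fam v k"
  shows "closest_point (feasible_set k v c 0 A a) y = y - (\<Sum>i<k. (v i \<bullet> y - c i) *\<^sub>R v i)"
proof (rule closest_point_eqI[OF feasible_set_convex feasible_set_closed])
  let ?p = "y - (\<Sum>i<k. (v i \<bullet> y - c i) *\<^sub>R v i)"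
  have vp: "v j \<bullet> ?p = c j" if "j < k" for j
    using orthonormal_fam_coeff[OF assms that] by (simp add: inner_diff_right)
  then show "?p \<in> feasible_set k v c 0 A a" unfolding feasible_set_def by simp
  show "(y - ?p) \<bullet> (x - ?p) \<le> 0" if "x \<in> feasible_set k v c 0 A a" for x
  proof -
    have "(y - ?p) \<bullet> (x - ?p) = (\<Sum>i<k. (v i \<bullet> y - c i) * (v i \<bullet> (x - ?p)))"
      by (simp add: inner_sum_left)
    also have "\<dots> = 0"
      using that vp unfolding feasible_set_def by (simp add: inner_diff_right del: inner_diff_left)
    finally show ?thesis by simp
  qed
qed

text \<open>Whatever the constraints, the principal's loss is at least the residual of \<open>y - w\<close> in the
  directions \<open>B\<^sub>3 - B\<^sub>2\<close> left free by all constraints, plus the error in the directions \<open>B\<^sub>1\<close>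
  pinned down by the ex-ante restriction alone, where \<open>x\<^sub>0\<close> is any point satisfying it.\<close>

lemma closest_point_feasible_dist_ge:
  fixes B1 B2 B3 :: "(real^'n) set"
  assumes ne: "feasible_set k E es m A a \<noteq> {}"
    and B3: "orthonormal_set B3" "span B3 = UNIV" and B: "B1 \<subseteq> B2" "B2 \<subseteq> B3"
    and B1: "B1 \<subseteq> span (A ` {..<m})" and B2: "E ` {..<k} \<subseteq> span B2" "A ` {..<m} \<subseteq> span B2"
    and x0: "\<And>j. j < m \<Longrightarrow> A j \<bullet> x0 = a j"
  shows "(\<Sum>b\<in>B3 - B2. (b \<bullet> (y - w))\<^sup>2) + (\<Sum>b\<in>B1. (b \<bullet> x0 - b \<bullet> w)\<^sup>2)
    \<le> (norm (closest_point (feasible_set k E es m A a) y - w))\<^sup>2"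
proof -
  let ?p = "closest_point (feasible_set k E es m A a) y"
  have p: "?p \<in> feasible_set k E es m A a" by (rule closest_point_in_set[OF feasible_set_closed ne])
  have fin: "finite B3" by (rule orthonormal_set_finite_card[OF B3(1)])
  have free: "b \<bullet> ?p = b \<bullet> y" if b: "b \<in> B3 - B2" for b
  proof (rule closest_point_feasible_free_direction[OF ne])
    have perp: "c \<bullet> b = 0" if "c \<in> span B2" for c
    proof -
      have "orthogonal b c'" if "c' \<in> B2" for c'
        using that b B orthonormal_set_inner[OF B3(1), of b c'] by (auto simp: orthogonal_def)
      then have "orthogonal b c" by (rule orthogonal_to_span[OF \<open>c \<in> span B2\<close>])
      then show ?thesis by (simp add: orthogonal_def inner_commute)
    qed
    show "E i \<bullet> b = 0" if "i < k" for i using B2(1) that by (auto intro: perp)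
    show "A j \<bullet> b = 0" if "j < m" for j using B2(2) that by (auto intro: perp)
  qed
  have pinned: "b \<bullet> ?p = b \<bullet> x0" if "b \<in> B1" for b
  proof -
    have "orthogonal (A j) (?p - x0)" if "j < m" for j
      using p x0[OF that] that unfolding feasible_set_def orthogonal_def by (simp add: inner_diff_right)
    then have "orthogonal b (?p - x0)"
      using B1 \<open>b \<in> B1\<close> by (intro orthogonal_to_span[of b "A ` {..<m}", THEN orthogonal_commute[THEN iffD1]])
        (auto simp: orthogonal_commute)
    then show ?thesis by (simp add: orthogonal_def inner_diff_right)
  qed
  have "(\<Sum>b\<in>B3 - B2. (b \<bullet> (y - w))\<^sup>2) + (\<Sum>b\<in>B1. (b \<bullet> x0 - b \<bullet> w)\<^sup>2)
      = (\<Sum>b\<in>B3 - B2. (b \<bullet> (?p - w))\<^sup>2) + (\<Sum>b\<in>B1. (b \<bullet> (?p - w))\<^sup>2)"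
    using free pinned by (simp add: inner_diff_right)
  also have "\<dots> \<le> (\<Sum>b\<in>B3 - B2. (b \<bullet> (?p - w))\<^sup>2) + (\<Sum>b\<in>B2. (b \<bullet> (?p - w))\<^sup>2)"
    using B fin by (intro add_left_mono sum_mono2) (auto intro: finite_subset)
  also have "\<dots> = (\<Sum>b\<in>B3. (b \<bullet> (?p - w))\<^sup>2)"
    using B fin by (simp add: sum.subset_diff[of B2 B3])
  also have "\<dots> = (norm (?p - w))\<^sup>2"
    by (simp add: orthonormal_set_parseval[OF B3, symmetric] power2_norm_eq_inner)
  finally show ?thesis .
qed

lemma quad_agent_choice_whitened:
  fixes R \<Omega> :: "real^'n^'n"
  assumes R: "sym_mat R" "R ** R = \<Omega>" "invertible R" and ne: "feasible_set k E es m A a \<noteq> {}"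
  shows "quad \<Omega> (agent_choice \<Omega> u (feasible_set k E es m A a) - w) =
    (norm (closest_point (feasible_set k (\<lambda>i. E i v* matrix_inv R) es m (\<lambda>j. A j v* matrix_inv R) a)
      (R *v u) - R *v w))\<^sup>2"
  using agent_choice_whitened(2)[OF R feasible_set_convex feasible_set_closed ne, of u]
  by (simp add: quad_eq_norm_root[OF R(1,2)] matrix_vector_mult_diff_distrib
      feasible_set_linear_image[OF matrix_inv[OF R(3)]])

lemma expected_loss_whitened:
  fixes R \<Omega> :: "real^'n^'n"
  assumes R: "sym_mat R" "R ** R = \<Omega>" "invertible R"
    and ne: "\<And>\<omega>. \<omega> \<in> space M \<Longrightarrow> feasible_set k E (e (S \<omega>)) m A a \<noteq> {}"
  shows "expected_loss M S \<Theta> ub wb \<Omega> k E e m A a =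
    (\<integral>\<^sup>+ \<omega>. ennreal ((norm (closest_point
        (feasible_set k (\<lambda>i. E i v* matrix_inv R) (e (S \<omega>)) m (\<lambda>j. A j v* matrix_inv R) a)
        (R *v ub (S \<omega>) (\<Theta> \<omega>)) - R *v wb (S \<omega>)))\<^sup>2) \<partial>M)"
  unfolding expected_loss_def using ne by (intro nn_integral_cong) (simp add: quad_agent_choice_whitened[OF R])

section \<open>Second moments\<close>

definition square_integrable :: "'w measure \<Rightarrow> ('w \<Rightarrow> real^'n) \<Rightarrow> bool" where
  "square_integrable M f \<longleftrightarrow> f \<in> borel_measurable M \<and> integrable M (\<lambda>\<omega>. (norm (f \<omega>))\<^sup>2)"

lemma square_integrable_diff:
  assumes f: "square_integrable M f" and g: "square_integrable M g"
  shows "square_integrable M (\<lambda>\<omega>. f \<omega> - g \<omega>)"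
  unfolding square_integrable_def
proof
  show meas: "(\<lambda>\<omega>. f \<omega> - g \<omega>) \<in> borel_measurable M"
    using assms unfolding square_integrable_def by (intro borel_measurable_diff) auto
  have bound: "(norm (f \<omega> - g \<omega>))\<^sup>2 \<le> 2 * (norm (f \<omega>))\<^sup>2 + 2 * (norm (g \<omega>))\<^sup>2" for \<omega>
  proof -
    have "(norm (f \<omega> - g \<omega>))\<^sup>2 \<le> (norm (f \<omega>) + norm (g \<omega>))\<^sup>2"
      by (rule power_mono[OF norm_triangle_ineq4]) simp
    moreover have "(norm (f \<omega>) + norm (g \<omega>))\<^sup>2 + (norm (f \<omega>) - norm (g \<omega>))\<^sup>2
        = 2 * (norm (f \<omega>))\<^sup>2 + 2 * (norm (g \<omega>))\<^sup>2"
      by (simp add: power2_eq_square algebra_simps)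
    ultimately show ?thesis using zero_le_power2[of "norm (f \<omega>) - norm (g \<omega>)"] by linarith
  qed
  show "integrable M (\<lambda>\<omega>. (norm (f \<omega> - g \<omega>))\<^sup>2)"
  proof (rule Bochner_Integration.integrable_bound)
    show "integrable M (\<lambda>\<omega>. 2 * (norm (f \<omega>))\<^sup>2 + 2 * (norm (g \<omega>))\<^sup>2)"
      using f g unfolding square_integrable_def by simp
    show "(\<lambda>\<omega>. (norm (f \<omega> - g \<omega>))\<^sup>2) \<in> borel_measurable M" using meas by measurable
    show "AE \<omega> in M. norm ((norm (f \<omega> - g \<omega>))\<^sup>2) \<le> norm (2 * (norm (f \<omega>))\<^sup>2 + 2 * (norm (g \<omega>))\<^sup>2)"
      using bound by (intro AE_I2) simp
  qed
qed

lemma square_integrable_matrix_vector_mult: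
  fixes A :: "real^'n^'m"
  assumes f: "square_integrable M f"
  shows "square_integrable M (\<lambda>\<omega>. A *v f \<omega>)"
  unfolding square_integrable_def
proof
  have cont: "(*v) A \<in> borel_measurable borel"
    by (intro borel_measurable_continuous_onI continuous_intros)
  then show meas: "(\<lambda>\<omega>. A *v f \<omega>) \<in> borel_measurable M"
    using measurable_compose[OF _ cont, of f M] f unfolding square_integrable_def by simp
  obtain K where K: "\<And>x. norm (A *v x) \<le> norm x * K"
    using bounded_linear.bounded[OF matrix_vector_mul_bounded_linear[of A]] by blast
  have bound: "(norm (A *v f \<omega>))\<^sup>2 \<le> K\<^sup>2 * (norm (f \<omega>))\<^sup>2" for \<omega>
    using power_mono[OF K[of "f \<omega>"] norm_ge_zero] by (simp add: power_mult_distrib mult.commute)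
  show "integrable M (\<lambda>\<omega>. (norm (A *v f \<omega>))\<^sup>2)"
  proof (rule Bochner_Integration.integrable_bound)
    show "integrable M (\<lambda>\<omega>. K\<^sup>2 * (norm (f \<omega>))\<^sup>2)"
      using f unfolding square_integrable_def by simp
    show "(\<lambda>\<omega>. (norm (A *v f \<omega>))\<^sup>2) \<in> borel_measurable M" using meas by measurable
    show "AE \<omega> in M. norm ((norm (A *v f \<omega>))\<^sup>2) \<le> norm (K\<^sup>2 * (norm (f \<omega>))\<^sup>2)"
      using bound by (intro AE_I2) simp
  qed
qed

lemma (in finite_measure) square_integrable_const: "square_integrable M (\<lambda>_. c)"
  unfolding square_integrable_def by simp

lemma (in finite_measure) square_integrable_integrable:
  assumes "square_integrable M f" shows "integrable M f"
proof -
  have f: "f \<in> borel_measurable M" and sq: "integrable M (\<lambda>\<omega>. (norm (f \<omega>))\<^sup>2)"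
    using assms unfolding square_integrable_def by auto
  have "(\<lambda>\<omega>. norm (f \<omega>)) \<in> borel_measurable M" using f by measurable
  then have "integrable M (\<lambda>\<omega>. norm (f \<omega>))" using sq by (rule square_integrable_imp_integrable)
  then show ?thesis using integrable_norm_iff[OF f] by simp
qed

lemma square_integrable_inner_square:
  assumes f: "square_integrable M f"
  shows "integrable M (\<lambda>\<omega>. (b \<bullet> f \<omega>)\<^sup>2)"
proof (rule Bochner_Integration.integrable_bound)
  show "integrable M (\<lambda>\<omega>. (norm b)\<^sup>2 * (norm (f \<omega>))\<^sup>2)"
    using f unfolding square_integrable_def by simp
  show "(\<lambda>\<omega>. (b \<bullet> f \<omega>)\<^sup>2) \<in> borel_measurable M"
    using f unfolding square_integrable_def
    by (intro borel_measurable_power borel_measurable_inner borel_measurable_const) auto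
  have "(b \<bullet> f \<omega>)\<^sup>2 \<le> (norm b * norm (f \<omega>))\<^sup>2" for \<omega>
    using Cauchy_Schwarz_ineq2[of b "f \<omega>"] by (simp add: power2_le_iff_abs_le)
  then show "AE \<omega> in M. norm ((b \<bullet> f \<omega>)\<^sup>2) \<le> norm ((norm b)\<^sup>2 * (norm (f \<omega>))\<^sup>2)"
    by (intro AE_I2) (simp add: power_mult_distrib)
qed

definition second_moment :: "'w measure \<Rightarrow> ('w \<Rightarrow> real^'n) \<Rightarrow> real^'n^'n" where
  "second_moment M f = (\<integral>\<omega>. outer (f \<omega>) (f \<omega>) \<partial>M)"

lemma integrable_outer:
  fixes f :: "'w \<Rightarrow> real^'n"
  assumes f: "square_integrable M f"
  shows "integrable M (\<lambda>\<omega>. outer (f \<omega>) (f \<omega>))"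
proof (rule Bochner_Integration.integrable_bound)
  show "integrable M (\<lambda>\<omega>. real CARD('n) * (norm (f \<omega>))\<^sup>2)"
    using f unfolding square_integrable_def by simp
  have cont: "(\<lambda>x::real^'n. outer x x) \<in> borel_measurable borel"
    unfolding outer_def by (intro borel_measurable_continuous_onI continuous_intros)
  then show "(\<lambda>\<omega>. outer (f \<omega>) (f \<omega>)) \<in> borel_measurable M"
    using measurable_compose[OF _ cont, of f M] f unfolding square_integrable_def by simp
  have "norm (outer x x) \<le> CARD('n) * (norm x)\<^sup>2" for x :: "real^'n"
  proof -
    have "norm (outer x x) = L2_set (\<lambda>i. norm (x $ i *\<^sub>R x)) UNIV"
      by (simp add: norm_vec_def outer_def vec_eq_iff)
    also have "\<dots> \<le> (\<Sum>i\<in>UNIV. norm (x $ i *\<^sub>R x))" by (rule L2_set_le_sum) simp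
    also have "\<dots> \<le> (\<Sum>i\<in>(UNIV::'n set). (norm x)\<^sup>2)"
      by (intro sum_mono) (simp add: power2_eq_square mult_right_mono component_le_norm_cart)
    finally show ?thesis by simp
  qed
  then show "AE \<omega> in M. norm (outer (f \<omega>) (f \<omega>)) \<le> norm (real CARD('n) * (norm (f \<omega>))\<^sup>2)"
    by (intro AE_I2) simp
qed

lemma second_moment_quad:
  fixes f :: "'w \<Rightarrow> real^'n"
  assumes "square_integrable M f"
  shows "b \<bullet> (second_moment M f *v b) = (\<integral>\<omega>. (b \<bullet> f \<omega>)\<^sup>2 \<partial>M)"
proof -
  have "linear (\<lambda>X::real^'n^'n. b \<bullet> (X *v b))"
    by (rule linearI) (simp_all add: matrix_vector_mult_add_rdistrib inner_add_right
        scaleR_matrix_vector_assoc[symmetric])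
  then have "(\<integral>\<omega>. b \<bullet> (outer (f \<omega>) (f \<omega>) *v b) \<partial>M) = b \<bullet> (second_moment M f *v b)"
    unfolding second_moment_def linear_conv_bounded_linear
    by (rule integral_bounded_linear[OF _ integrable_outer[OF assms]])
  moreover have "b \<bullet> (outer x x *v b) = (b \<bullet> x)\<^sup>2" for x :: "real^'n"
    by (simp add: outer_def matrix_vector_mult_def inner_vec_def sum_distrib_left sum_distrib_right
        power2_eq_square mult_ac)
  ultimately show ?thesis by simp
qed

lemma sym_mat_second_moment:
  fixes f :: "'w \<Rightarrow> real^'n"
  assumes "square_integrable M f"
  shows "sym_mat (second_moment M f)"
proof -
  have "linear (transpose :: real^'n^'n \<Rightarrow> real^'n^'n)"
    by (rule linearI) (simp_all add: transpose_def vec_eq_iff)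
  then have "(\<integral>\<omega>. transpose (outer (f \<omega>) (f \<omega>)) \<partial>M) = transpose (second_moment M f)"
    unfolding second_moment_def linear_conv_bounded_linear
    by (rule integral_bounded_linear[OF _ integrable_outer[OF assms]])
  moreover have "transpose (outer x x) = outer x x" for x :: "real^'n"
    by (simp add: transpose_def outer_def vec_eq_iff mult.commute)
  ultimately show ?thesis unfolding sym_mat_def second_moment_def by simp
qed

lemma (in prob_space) covariance_quad_le:
  fixes f :: "'a \<Rightarrow> real^'n"
  assumes f: "square_integrable M f"
  shows "b \<bullet> (second_moment M (\<lambda>\<omega>. f \<omega> - expectation f) *v b) \<le> expectation (\<lambda>\<omega>. (c - b \<bullet> f \<omega>)\<^sup>2)"
proof -
  define h where "h \<omega> = b \<bullet> (f \<omega> - expectation f)" for \<omega>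
  have fc: "square_integrable M (\<lambda>\<omega>. f \<omega> - expectation f)"
    by (rule square_integrable_diff[OF f square_integrable_const])
  have h: "integrable M h" "integrable M (\<lambda>\<omega>. (h \<omega>)\<^sup>2)"
    unfolding h_def using square_integrable_integrable[OF fc] square_integrable_inner_square[OF fc] by auto
  have "expectation h = b \<bullet> (expectation f - expectation f)"
    unfolding h_def using square_integrable_integrable[OF f] by (simp add: prob_space)
  then have h0: "expectation h = 0" by simp
  have eq: "(c - b \<bullet> f \<omega>)\<^sup>2 = (c - b \<bullet> expectation f)\<^sup>2 - 2 * (c - b \<bullet> expectation f) * h \<omega> + (h \<omega>)\<^sup>2" for \<omega>
    unfolding h_def by (simp add: inner_diff_right power2_eq_square algebra_simps)
  have "expectation (\<lambda>\<omega>. (c - b \<bullet> f \<omega>)\<^sup>2) = (c - b \<bullet> expectation f)\<^sup>2 + expectation (\<lambda>\<omega>. (h \<omega>)\<^sup>2)"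
    unfolding eq using h h0 by (simp add: prob_space)
  moreover have "b \<bullet> (second_moment M (\<lambda>\<omega>. f \<omega> - expectation f) *v b) = expectation (\<lambda>\<omega>. (h \<omega>)\<^sup>2)"
    unfolding h_def by (rule second_moment_quad[OF fc])
  ultimately show ?thesis by simp
qed

section \<open>Optimality of the eigenbasis explainer\<close>

text \<open>The explanation dictated in state \<open>s\<close> is the one the principal's bliss point \<open>wb s\<close>
  would give.\<close>

lemma expected_loss_eigen_explainer:
  fixes R \<Omega> :: "real^'n^'n"
  assumes R: "sym_mat R" "R ** R = \<Omega>" "invertible R"
    and z: "square_integrable M (\<lambda>\<omega>. R *v (ub (S \<omega>) (\<Theta> \<omega>) - wb (S \<omega>)))"
    and v: "spectral_basis (second_moment M (\<lambda>\<omega>. R *v (ub (S \<omega>) (\<Theta> \<omega>) - wb (S \<omega>)))) v \<mu>"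
    and "k \<le> CARD('n)"
  shows "expected_loss M S \<Theta> ub wb \<Omega> k (\<lambda>i. R *v v i) (\<lambda>s i. (R *v v i) \<bullet> wb s) 0 A a
    = ennreal (\<Sum>i\<in>{k..<CARD('n)}. \<mu> i)"
proof -
  define z where "z \<omega> = R *v (ub (S \<omega>) (\<Theta> \<omega>) - wb (S \<omega>))" for \<omega>
  have on: "orthonormal_fam v CARD('n)" using v unfolding spectral_basis_def by simp
  have whitened: "(R *v v i) v* matrix_inv R = v i" for i
    using R(1) matrix_inv(1)[OF R(3)] transpose_matrix_vector[of R "v i"]
    by (simp add: sym_mat_def vector_matrix_mul_assoc)
  have "quad \<Omega> (agent_choice \<Omega> u (feasible_set k (\<lambda>i. R *v v i) (\<lambda>i. (R *v v i) \<bullet> w) 0 A a) - w)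
      = (\<Sum>i\<in>{k..<CARD('n)}. (v i \<bullet> (R *v (u - w)))\<^sup>2)" for u w
  proof -
    let ?F = "feasible_set k (\<lambda>i. R *v v i) (\<lambda>i. (R *v v i) \<bullet> w) 0 A a"
    have "w \<in> ?F" unfolding feasible_set_def by simp
    then have ne: "?F \<noteq> {}" by blast
    have "quad \<Omega> (agent_choice \<Omega> u ?F - w) = (norm (R *v u - (\<Sum>i<k. (v i \<bullet> (R *v u) - (R *v v i) \<bullet> w) *\<^sub>R v i) - R *v w))\<^sup>2"
      unfolding quad_agent_choice_whitened[OF R ne] whitened
      by (simp add: closest_point_orthonormal_constraints[OF orthonormal_fam_mono[OF on \<open>k \<le> CARD('n)\<close>]])
    also have "R *v u - (\<Sum>i<k. (v i \<bullet> (R *v u) - (R *v v i) \<bullet> w) *\<^sub>R v i) - R *v w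
        = R *v (u - w) - (\<Sum>i<k. (v i \<bullet> (R *v (u - w))) *\<^sub>R v i)"
      by (simp add: matrix_vector_mult_diff_distrib inner_diff_right sym_mat_inner[OF R(1)])
    finally show ?thesis by (simp add: orthonormal_fam_tail_norm[OF on \<open>k \<le> CARD('n)\<close>])
  qed
  then have "expected_loss M S \<Theta> ub wb \<Omega> k (\<lambda>i. R *v v i) (\<lambda>s i. (R *v v i) \<bullet> wb s) 0 A a
      = (\<integral>\<^sup>+ \<omega>. ennreal (\<Sum>i\<in>{k..<CARD('n)}. (v i \<bullet> z \<omega>)\<^sup>2) \<partial>M)"
    unfolding expected_loss_def z_def by simp
  also have "\<dots> = ennreal (\<Sum>i\<in>{k..<CARD('n)}. \<integral>\<omega>. (v i \<bullet> z \<omega>)\<^sup>2 \<partial>M)"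
    using square_integrable_inner_square[OF z[folded z_def]]
    by (simp add: nn_integral_eq_integral sum_nonneg)
  also have "\<dots> = ennreal (\<Sum>i\<in>{k..<CARD('n)}. \<mu> i)"
    using second_moment_quad[OF z] spectral_basis_eigenvalue[OF v] unfolding z_def
    by (intro arg_cong[where f = ennreal] sum.cong) auto
  finally show ?thesis .
qed

lemma (in prob_space) eigenvalue_tail_le_expectation:
  fixes z w :: "'a \<Rightarrow> real^'n"
  assumes z: "square_integrable M z" and w: "square_integrable M w"
    and v: "spectral_basis (second_moment M z) v \<mu>" and k: "k < CARD('n)"
    and cov: "\<And>b. norm b = 1 \<Longrightarrow> \<mu> k \<le> b \<bullet> (second_moment M (\<lambda>\<omega>. w \<omega> - expectation w) *v b)"
    and B3: "orthonormal_set B3" "span B3 = UNIV" and B: "B1 \<subseteq> B2" "B2 \<subseteq> B3"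
    and card: "card B2 \<le> card B1 + k"
  shows "ennreal (\<Sum>i\<in>{k..<CARD('n)}. \<mu> i)
    \<le> (\<integral>\<^sup>+ \<omega>. ennreal ((\<Sum>b\<in>B3 - B2. (b \<bullet> z \<omega>)\<^sup>2) + (\<Sum>b\<in>B1. (c b - b \<bullet> w \<omega>)\<^sup>2)) \<partial>M)"
proof -
  let ?D = "second_moment M z"
  have int1: "integrable M (\<lambda>\<omega>. (b \<bullet> z \<omega>)\<^sup>2)" for b
    by (rule square_integrable_inner_square[OF z])
  have int2: "integrable M (\<lambda>\<omega>. (x - b \<bullet> w \<omega>)\<^sup>2)" for b x
    unfolding power2_diff
    using square_integrable_integrable[OF w] square_integrable_inner_square[OF w, of b] by simp
  have "(\<Sum>i\<in>{k..<CARD('n)}. \<mu> i) \<le> (\<Sum>b\<in>B3 - B2. b \<bullet> (?D *v b)) + real (card B1) * \<mu> k"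
  proof (rule spectral_basis_sum_tail_le[OF v _ k B3 B(2) card])
    show "0 \<le> \<mu> i" if "i < CARD('n)" for i
      using spectral_basis_eigenvalue[OF v that] second_moment_quad[OF z]
        Bochner_Integration.integral_nonneg[of M "\<lambda>\<omega>. (v i \<bullet> z \<omega>)\<^sup>2"] by simp
  qed
  also have "\<dots> \<le> (\<Sum>b\<in>B3 - B2. b \<bullet> (?D *v b)) + (\<Sum>b\<in>B1. expectation (\<lambda>\<omega>. (c b - b \<bullet> w \<omega>)\<^sup>2))"
  proof (intro add_left_mono sum_bounded_below[of B1 "\<mu> k", simplified])
    fix b assume "b \<in> B1"
    then have "norm b = 1" using B3(1) B unfolding orthonormal_set_def by auto
    then show "\<mu> k \<le> expectation (\<lambda>\<omega>. (c b - b \<bullet> w \<omega>)\<^sup>2)"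
      using cov covariance_quad_le[OF w] order_trans by blast
  qed
  also have "\<dots> = expectation (\<lambda>\<omega>. (\<Sum>b\<in>B3 - B2. (b \<bullet> z \<omega>)\<^sup>2) + (\<Sum>b\<in>B1. (c b - b \<bullet> w \<omega>)\<^sup>2))"
    using int1 int2 by (simp add: second_moment_quad[OF z])
  finally have "ennreal (\<Sum>i\<in>{k..<CARD('n)}. \<mu> i)
      \<le> ennreal (expectation (\<lambda>\<omega>. (\<Sum>b\<in>B3 - B2. (b \<bullet> z \<omega>)\<^sup>2) + (\<Sum>b\<in>B1. (c b - b \<bullet> w \<omega>)\<^sup>2)))"
    by (rule ennreal_leI)
  also have "\<dots> = (\<integral>\<^sup>+ \<omega>. ennreal ((\<Sum>b\<in>B3 - B2. (b \<bullet> z \<omega>)\<^sup>2) + (\<Sum>b\<in>B1. (c b - b \<bullet> w \<omega>)\<^sup>2)) \<partial>M)"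
    using int1 int2 by (intro nn_integral_eq_integral[symmetric]) (auto simp: sum_nonneg)
  finally show ?thesis .
qed

lemma (in prob_space) closest_point_expected_loss_ge:
  fixes y w :: "'a \<Rightarrow> real^'n"
  assumes z: "square_integrable M (\<lambda>\<omega>. y \<omega> - w \<omega>)" and w: "square_integrable M w"
    and v: "spectral_basis (second_moment M (\<lambda>\<omega>. y \<omega> - w \<omega>)) v \<mu>" and k: "k < CARD('n)"
    and cov: "\<And>b. norm b = 1 \<Longrightarrow> \<mu> k \<le> b \<bullet> (second_moment M (\<lambda>\<omega>. w \<omega> - expectation w) *v b)"
    and ne: "\<And>\<omega>. \<omega> \<in> space M \<Longrightarrow> feasible_set k E (es \<omega>) m A a \<noteq> {}"
  shows "ennreal (\<Sum>i\<in>{k..<CARD('n)}. \<mu> i)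
    \<le> (\<integral>\<^sup>+ \<omega>. ennreal ((norm (closest_point (feasible_set k E (es \<omega>) m A a) (y \<omega>) - w \<omega>))\<^sup>2) \<partial>M)"
proof -
  obtain \<omega>0 where "\<omega>0 \<in> space M" using not_empty by blast
  then obtain x0 where x0: "\<And>j. j < m \<Longrightarrow> A j \<bullet> x0 = a j"
    using ne unfolding feasible_set_def by blast
  obtain B1 B2 B3 where B3: "orthonormal_set B3" "span B3 = UNIV" and B: "B1 \<subseteq> B2" "B2 \<subseteq> B3"
    and B1: "B1 \<subseteq> span (A ` {..<m})" and B2: "A ` {..<m} \<subseteq> span B2" "E ` {..<k} \<subseteq> span B2"
    and card: "card B2 \<le> card B1 + card (E ` {..<k})"
    by (rule orthonormal_flag[of "E ` {..<k}" "A ` {..<m}"]) auto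
  then have "card B2 \<le> card B1 + k" using card_image_le[of "{..<k}" E] by simp
  from eigenvalue_tail_le_expectation[OF z w v k cov B3 B this, where c = "\<lambda>b. b \<bullet> x0"]
  have "ennreal (\<Sum>i\<in>{k..<CARD('n)}. \<mu> i)
      \<le> (\<integral>\<^sup>+ \<omega>. ennreal ((\<Sum>b\<in>B3 - B2. (b \<bullet> (y \<omega> - w \<omega>))\<^sup>2) + (\<Sum>b\<in>B1. (b \<bullet> x0 - b \<bullet> w \<omega>)\<^sup>2)) \<partial>M)" .
  also have "\<dots> \<le> (\<integral>\<^sup>+ \<omega>. ennreal ((norm (closest_point (feasible_set k E (es \<omega>) m A a) (y \<omega>) - w \<omega>))\<^sup>2) \<partial>M)"
    using B1 B2 B3 B x0 ne by (intro nn_integral_mono ennreal_leI closest_point_feasible_dist_ge) auto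
  finally show ?thesis .
qed

lemma (in prob_space) expected_loss_ge:
  fixes R \<Omega> :: "real^'n^'n"
  assumes R: "sym_mat R" "R ** R = \<Omega>" "invertible R"
    and z: "square_integrable M (\<lambda>\<omega>. R *v (ub (S \<omega>) (\<Theta> \<omega>) - wb (S \<omega>)))"
    and w: "square_integrable M (\<lambda>\<omega>. R *v wb (S \<omega>))"
    and v: "spectral_basis (second_moment M (\<lambda>\<omega>. R *v (ub (S \<omega>) (\<Theta> \<omega>) - wb (S \<omega>)))) v \<mu>"
    and k: "k < CARD('n)"
    and cov: "\<And>b. norm b = 1 \<Longrightarrow>
      \<mu> k \<le> b \<bullet> (second_moment M (\<lambda>\<omega>. R *v wb (S \<omega>) - expectation (\<lambda>\<omega>. R *v wb (S \<omega>))) *v b)"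
    and adm: "admissible M S Ms k E e m A a"
  shows "ennreal (\<Sum>i\<in>{k..<CARD('n)}. \<mu> i) \<le> expected_loss M S \<Theta> ub wb \<Omega> k E e m A a"
proof -
  have ne: "feasible_set k E (e (S \<omega>)) m A a \<noteq> {}" if "\<omega> \<in> space M" for \<omega>
    using adm that unfolding admissible_def by blast
  have yw: "(\<lambda>\<omega>. R *v ub (S \<omega>) (\<Theta> \<omega>) - R *v wb (S \<omega>)) = (\<lambda>\<omega>. R *v (ub (S \<omega>) (\<Theta> \<omega>) - wb (S \<omega>)))"
    by (simp add: matrix_vector_mult_diff_distrib)
  have "feasible_set k (\<lambda>i. E i v* matrix_inv R) (e (S \<omega>)) m (\<lambda>j. A j v* matrix_inv R) a \<noteq> {}"
    if "\<omega> \<in> space M" for \<omega>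
    using ne[OF that] by (simp add: feasible_set_linear_image[OF matrix_inv[OF R(3)], symmetric])
  from closest_point_expected_loss_ge[of "\<lambda>\<omega>. R *v ub (S \<omega>) (\<Theta> \<omega>)" "\<lambda>\<omega>. R *v wb (S \<omega>)",
      unfolded yw, OF z w v k cov this]
  show ?thesis by (simp add: expected_loss_whitened[where M = M and S = S and e = e, OF R ne])
qed

theorem proposition3:
  fixes M :: "'w measure" and Ms :: "'s measure" and Mt :: "'t measure"
    and S :: "'w \<Rightarrow> 's" and \<Theta> :: "'w \<Rightarrow> 't"
    and ub :: "'s \<Rightarrow> 't \<Rightarrow> real^'n" and wb :: "'s \<Rightarrow> real^'n"
    and \<Omega> :: "real^'n^'n" and k :: nat
  assumes "prob_space M"
    and "S \<in> measurable M Ms" and "\<Theta> \<in> measurable M Mt"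
    and "(\<lambda>\<omega>. ub (S \<omega>) (\<Theta> \<omega>)) \<in> borel_measurable M"
    and "wb \<in> borel_measurable Ms"
    and "integrable M (\<lambda>\<omega>. (norm (ub (S \<omega>) (\<Theta> \<omega>)))\<^sup>2)"
    and "integrable M (\<lambda>\<omega>. (norm (wb (S \<omega>)))\<^sup>2)"
    and "pos_def_mat \<Omega>"
    and "k < CARD('n)"
    and "eig_desc
           (\<integral>\<omega>. outer (mat_sqrt \<Omega> *v wb (S \<omega>) - (\<integral>\<omega>'. mat_sqrt \<Omega> *v wb (S \<omega>') \<partial>M))
                       (mat_sqrt \<Omega> *v wb (S \<omega>) - (\<integral>\<omega>'. mat_sqrt \<Omega> *v wb (S \<omega>') \<partial>M)) \<partial>M)
           CARD('n)
         \<ge> eig_desc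
           (\<integral>\<omega>. outer (mat_sqrt \<Omega> *v (ub (S \<omega>) (\<Theta> \<omega>) - wb (S \<omega>)))
                       (mat_sqrt \<Omega> *v (ub (S \<omega>) (\<Theta> \<omega>) - wb (S \<omega>))) \<partial>M)
           (k + 1)"
  shows "\<exists>E e A a. second_best M S Ms \<Theta> ub wb \<Omega> k E e 0 A a"
proof -
  interpret prob_space M by fact
  define R where "R = mat_sqrt \<Omega>"
  have R: "sym_mat R" "R ** R = \<Omega>" "invertible R"
    using mat_sqrt_pos_def[OF assms(8)] unfolding R_def by auto
  define z where "z \<omega> = R *v (ub (S \<omega>) (\<Theta> \<omega>) - wb (S \<omega>))" for \<omega>
  define w where "w \<omega> = R *v wb (S \<omega>)" for \<omega>
  have "square_integrable M (\<lambda>\<omega>. ub (S \<omega>) (\<Theta> \<omega>))" "square_integrable M (\<lambda>\<omega>. wb (S \<omega>))"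
    using assms(2,4-7) unfolding square_integrable_def by auto
  then have z: "square_integrable M z" and w: "square_integrable M w"
    unfolding z_def w_def by (intro square_integrable_matrix_vector_mult square_integrable_diff; simp)+
  obtain v \<mu> where v: "spectral_basis (second_moment M z) v \<mu>"
    using sym_mat_spectral_basis[OF sym_mat_second_moment[OF z]] by blast
  have "eig_desc (second_moment M z) (k + 1) \<le> eig_desc (second_moment M (\<lambda>\<omega>. w \<omega> - expectation w)) CARD('n)"
    using assms(10) unfolding second_moment_def z_def w_def R_def .
  with spectral_basis_eigenvalue_le_quad[OF v sym_mat_second_moment assms(9)]
  have cov: "\<mu> k \<le> b \<bullet> (second_moment M (\<lambda>\<omega>. w \<omega> - expectation w) *v b)" if "norm b = 1" for b
    using that square_integrable_diff[OF w square_integrable_const] by blast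
  let ?E = "\<lambda>i. R *v v i" and ?e = "\<lambda>s i. (R *v v i) \<bullet> wb s"
  have "admissible M S Ms k ?E ?e 0 A a" for A a
    unfolding admissible_def feasible_set_def using assms(5) by auto
  moreover have "expected_loss M S \<Theta> ub wb \<Omega> k ?E ?e 0 A a \<le> expected_loss M S \<Theta> ub wb \<Omega> k E' e' m' A' a'"
    if "admissible M S Ms k E' e' m' A' a'" for A a E' e' m' A' a'
    using expected_loss_eigen_explainer[where S = S and \<Theta> = \<Theta> and ub = ub and wb = wb,
        OF R z[unfolded z_def] v[unfolded z_def] less_imp_le[OF assms(9)]]
      expected_loss_ge[where S = S and \<Theta> = \<Theta> and ub = ub and wb = wb,
        OF R z[unfolded z_def] w[unfolded w_def] v[unfolded z_def] assms(9) cov[unfolded w_def] that]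
    by simp
  ultimately show ?thesis unfolding second_best_def by blast
qed

end
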